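(* Let $k$ be a field, let $A$ be a torsion-free abelian group of finite rank acted upon by a group $\Gamma$, and let $P$ be a faithful prime ideal of $kA$. Then: (i) $r(c(P))=r(c(kB\cap P))$ for every dense subgroup $B$ of $A$, where $c(kB\cap P)$ is the controller of the ideal $kB\cap P$ of $kB$ (as a subgroup of $B$); (ii) if $S_\Gamma(P)=\Gamma$, then $\operatorname{is}_A c(P)$ is a $\Gamma$-invariant subgroup of $A$.
   Context: $\Gamma$ acts on $A$ by automorphisms, and this action extends to $kA$; $I^\gamma$ is the image of an ideal $I$ under $\gamma$. An ideal $I$ of $kA$ is faithful if $A\cap(1+I)=\{1\}$; a subgroup $H$ controls $I$ if $I=(I\cap kH)kA$; the controller $c(I)$ is the intersection of all subgroups controlling $I$. $r(X)$ is the torsion-free rank of an abelian group $X$. For $B\le A$, $\operatorname{is}_A(B)=\{a\in A: a^n\in B \text{ for some } n\ge1\}$; $B$ is dense if $\operatorname{is}_A(B)=A$. The standardiser $S_\Gamma(I)$ is the set of $\gamma\in\Gamma$ such that $I\cap kB=I^\gamma\cap kB$ for some finitely generated dense subgroup $B$ of $A$. *)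

theory Defs
  imports "HOL-Library.Poly_Mapping" "HOL-Algebra.Group"
begin

(* The abelian group A is the whole type 'a (written additively); its group algebra kA
  is the type of finitely supported functions ('a \<Rightarrow>\<^sub>0 'k) with convolution product.
  The element a of A corresponds to Poly_Mapping.single a 1. *)

definition nmult :: "nat \<Rightarrow> 'a::ab_group_add \<Rightarrow> 'a" where
  "nmult n a = (((+) a) ^^ n) 0"

definition zmult :: "int \<Rightarrow> 'a::ab_group_add \<Rightarrow> 'a" where
  "zmult z a = (if 0 \<le> z then nmult (nat z) a else - nmult (nat (- z)) a)"

definition subgrp :: "'a::ab_group_add set \<Rightarrow> bool" where
  "subgrp H \<longleftrightarrow> 0 \<in> H \<and> (\<forall>x\<in>H. \<forall>y\<in>H. x - y \<in> H)"

definition gen_subgrp :: "'a::ab_group_add set \<Rightarrow> 'a set" where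
  "gen_subgrp F = \<Inter>{H. subgrp H \<and> F \<subseteq> H}"

definition fin_gen :: "'a::ab_group_add set \<Rightarrow> bool" where
  "fin_gen B \<longleftrightarrow> (\<exists>F. finite F \<and> B = gen_subgrp F)"

definition torsion_free :: "'a::ab_group_add set \<Rightarrow> bool" where
  "torsion_free X \<longleftrightarrow> (\<forall>a\<in>X. \<forall>n. n > 0 \<longrightarrow> nmult n a = 0 \<longrightarrow> a = 0)"

definition z_indep :: "'a::ab_group_add set \<Rightarrow> bool" where
  "z_indep F \<longleftrightarrow> (\<forall>c. (\<Sum>x\<in>F. zmult (c x) x) = 0 \<longrightarrow> (\<forall>x\<in>F. c x = 0))"

(* Torsion-free rank r(X): maximal size of a Z-independent finite subset
  (= dim of Q \<otimes> X). *)
definition tf_rank :: "'a::ab_group_add set \<Rightarrow> nat" where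
  "tf_rank X = Sup {card F | F. finite F \<and> F \<subseteq> X \<and> z_indep F}"

definition finite_rank :: "'a::ab_group_add set \<Rightarrow> bool" where
  "finite_rank X \<longleftrightarrow> (\<exists>n. \<forall>F. finite F \<and> F \<subseteq> X \<and> z_indep F \<longrightarrow> card F \<le> n)"

definition isol :: "'a::ab_group_add set \<Rightarrow> 'a set" where
  "isol B = {a. \<exists>n\<ge>1. nmult n a \<in> B}"

definition dense :: "'a::ab_group_add set \<Rightarrow> bool" where
  "dense B \<longleftrightarrow> isol B = UNIV"

definition galg :: "'a set \<Rightarrow> ('a \<Rightarrow>\<^sub>0 'k::zero) set" where
  "galg B = {f. Poly_Mapping.keys f \<subseteq> B}"

definition is_ideal_in :: "'r::comm_ring_1 set \<Rightarrow> 'r set \<Rightarrow> bool" where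
  "is_ideal_in R I \<longleftrightarrow> I \<subseteq> R \<and> 0 \<in> I \<and> (\<forall>x\<in>I. \<forall>y\<in>I. x + y \<in> I)
     \<and> (\<forall>x\<in>I. \<forall>r\<in>R. r * x \<in> I)"

definition is_ideal :: "'r::comm_ring_1 set \<Rightarrow> bool" where
  "is_ideal I \<longleftrightarrow> is_ideal_in UNIV I"

definition prime_ideal :: "'r::comm_ring_1 set \<Rightarrow> bool" where
  "prime_ideal P \<longleftrightarrow> is_ideal P \<and> P \<noteq> UNIV \<and> (\<forall>x y. x * y \<in> P \<longrightarrow> x \<in> P \<or> y \<in> P)"

definition faithful :: "('a::ab_group_add \<Rightarrow>\<^sub>0 'k::comm_ring_1) set \<Rightarrow> bool" where
  "faithful I \<longleftrightarrow> (\<forall>a. Poly_Mapping.single a 1 - 1 \<in> I \<longrightarrow> a = 0)"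

definition ideal_gen_in :: "'r::comm_ring_1 set \<Rightarrow> 'r set \<Rightarrow> 'r set" where
  "ideal_gen_in R S = {f. \<exists>(n::nat) x y. (\<forall>i<n. x i \<in> S \<and> y i \<in> R) \<and> f = (\<Sum>i<n. x i * y i)}"

definition controls :: "'a::ab_group_add set \<Rightarrow> ('a \<Rightarrow>\<^sub>0 'k::comm_ring_1) set \<Rightarrow> 'a set \<Rightarrow> bool" where
  "controls B J H \<longleftrightarrow> J = ideal_gen_in (galg B) (J \<inter> galg H)"

definition controller :: "'a::ab_group_add set \<Rightarrow> ('a \<Rightarrow>\<^sub>0 'k::comm_ring_1) set \<Rightarrow> 'a set" where
  "controller B J = \<Inter>{H. subgrp H \<and> H \<subseteq> B \<and> controls B J H}"

definition aut_action :: "('g, 'b) monoid_scheme \<Rightarrow> ('g \<Rightarrow> 'a::ab_group_add \<Rightarrow> 'a) \<Rightarrow> bool" where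
  "aut_action G act \<longleftrightarrow> group G
     \<and> (\<forall>g\<in>carrier G. bij (act g) \<and> (\<forall>x y. act g (x + y) = act g x + act g y))
     \<and> act \<one>\<^bsub>G\<^esub> = id
     \<and> (\<forall>g\<in>carrier G. \<forall>h\<in>carrier G. act (g \<otimes>\<^bsub>G\<^esub> h) = act g \<circ> act h)"

(* Image I^\<gamma> of an ideal of kA under the extension of the automorphism \<sigma> = act \<gamma>
  to kA: (\<Sum> c_a a)^\<gamma> = \<Sum> c_a \<sigma>(a). *)
definition ideal_image :: "('a \<Rightarrow> 'a) \<Rightarrow> ('a \<Rightarrow>\<^sub>0 'k::zero) set \<Rightarrow> ('a \<Rightarrow>\<^sub>0 'k) set" where
  "ideal_image \<sigma> I = {g. \<exists>f\<in>I. \<forall>a. Poly_Mapping.lookup g (\<sigma> a) = Poly_Mapping.lookup f a}"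

definition standardiser ::
  "('g, 'b) monoid_scheme \<Rightarrow> ('g \<Rightarrow> 'a::ab_group_add \<Rightarrow> 'a) \<Rightarrow> ('a \<Rightarrow>\<^sub>0 'k::comm_ring_1) set \<Rightarrow> 'g set" where
  "standardiser G act I = {\<gamma> \<in> carrier G. \<exists>B. subgrp B \<and> fin_gen B \<and> dense B \<and>
      I \<inter> galg B = ideal_image (act \<gamma>) I \<inter> galg B}"

end

theory Submission
  imports Defs "HOL-Computational_Algebra.Polynomial"
begin

text \<open>
  Fix a dense subgroup \<open>B\<close>, and let \<open>C = c(P)\<close> and \<open>D = c(P \<inter> kB)\<close>. A subgroup
  \<open>H\<close> controls an ideal exactly when the projection \<open>\<pi>\<^sub>H\<close> onto \<open>kH\<close> preserves it, so
  \<open>C \<inter> B\<close> controls \<open>P \<inter> kB\<close> and \<open>D \<subseteq> C\<close>.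

  Conversely let \<open>E = is(D)\<close>. As \<open>A/E\<close> is torsion-free of finite rank, finitely many
  elements outside \<open>E\<close> can be kept away from zero by an additive real functional vanishing
  on \<open>E\<close>; this gives the unique product property for sets of cosets of \<open>E\<close>, whence the
  extension \<open>J = (P \<inter> kE) kA\<close> is prime. Now \<open>J \<subseteq> P\<close> and \<open>P \<inter> kB \<subseteq> J\<close>, and \<open>kA\<close>
  is integral over \<open>kB\<close> because \<open>A/B\<close> is torsion; incomparability yields \<open>P = J\<close>, so
  \<open>E\<close> controls \<open>P\<close> and \<open>C \<subseteq> is(D)\<close>. From \<open>D \<subseteq> C \<subseteq> is(D)\<close> the ranks agree.

  For (ii), if \<open>\<gamma>\<close> standardises \<open>P\<close> via \<open>B\<close>, the first part applied to \<open>P\<close> and to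
  \<open>P\<^sup>\<gamma>\<close> gives \<open>is c(P) = is c(P \<inter> kB) = is c(P\<^sup>\<gamma> \<inter> kB) = is c(P\<^sup>\<gamma>) \<supseteq> \<gamma>(c(P))\<close>.
\<close>

section \<open>Integer multiples\<close>

lemma nmult_0 [simp]: "nmult 0 a = 0" by (simp add: nmult_def)
lemma nmult_Suc: "nmult (Suc n) a = a + nmult n a" by (simp add: nmult_def)
lemma nmult_add: "nmult (m + n) a = nmult m a + nmult n a"
  by (induction m) (simp_all add: nmult_Suc add.assoc)
lemma nmult_Suc0 [simp]: "nmult (Suc 0) a = a" by (simp add: nmult_Suc)
lemma nmult_plus: "nmult n (a + b) = nmult n a + nmult n b"
  by (induction n) (simp_all add: nmult_Suc algebra_simps)
lemma nmult_zero [simp]: "nmult n 0 = 0"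
  by (induction n) (simp_all add: nmult_Suc)
lemma nmult_uminus: "nmult n (- a) = - nmult n a"
  by (induction n) (simp_all add: nmult_Suc algebra_simps)
lemma nmult_diff: "nmult n (a - b) = nmult n a - nmult n b"
  using nmult_plus[of n a "-b"] nmult_uminus[of n b] by simp
lemma nmult_mult: "nmult (m * n) a = nmult m (nmult n a)"
  by (induction m) (simp_all add: nmult_Suc nmult_add)
lemma nmult_sub: "n \<le> m \<Longrightarrow> nmult (m - n) a = nmult m a - nmult n a"
  using nmult_add[of "m - n" n a] by simp

lemma additive_nmult:
  assumes "\<And>x y. s (x + y) = s x + s y"
  shows "s (nmult n a) = nmult n (s a)"
proof -
  have "s 0 = 0" using assms[of 0 0] by simp
  then show ?thesis by (induction n) (simp_all add: nmult_Suc assms)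
qed

lemma zmult_of_nat [simp]: "zmult (int n) a = nmult n a"
  by (simp add: zmult_def)

lemma zmult_nat_diff: "zmult (int m - int n) a = nmult m a - nmult n a"
proof (cases "n \<le> m")
  case True
  then have e: "int m - int n = int (m - n)" by simp
  have "zmult (int m - int n) a = nmult (m - n) a" by (simp only: e zmult_of_nat)
  then show ?thesis using True by (simp add: nmult_sub)
next
  case False
  then have l: "\<not> 0 \<le> int m - int n" and e: "nat (- (int m - int n)) = n - m" by auto
  have "zmult (int m - int n) a = - nmult (n - m) a"
    unfolding zmult_def by (simp only: l e if_False)
  then show ?thesis using False by (simp add: nmult_sub)
qed

lemma zmult_decomp: "zmult z a = nmult (nat z) a - nmult (nat (- z)) a"
proof -
  have "z = int (nat z) - int (nat (- z))" by simp
  then have "zmult z a = zmult (int (nat z) - int (nat (- z))) a" by simp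
  then show ?thesis by (simp only: zmult_nat_diff)
qed

lemma zmult_0 [simp]: "zmult 0 a = 0" by (simp add: zmult_def)
lemma zmult_1 [simp]: "zmult 1 a = a" by (simp add: zmult_def nmult_Suc)
lemma zmult_zero [simp]: "zmult z 0 = 0" by (simp add: zmult_def)

lemma zmult_add: "zmult (x + y) a = zmult x a + zmult y a"
proof -
  obtain p1 p2 where x: "x = int p1 - int p2" by (rule int_diff_cases)
  obtain q1 q2 where y: "y = int q1 - int q2" by (rule int_diff_cases)
  have "x + y = int (p1 + q1) - int (p2 + q2)" using x y by simp
  then have "zmult (x + y) a = nmult (p1 + q1) a - nmult (p2 + q2) a"
    by (simp only: zmult_nat_diff)
  also have "\<dots> = (nmult p1 a - nmult p2 a) + (nmult q1 a - nmult q2 a)"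
    by (simp add: nmult_add)
  finally show ?thesis using x y by (simp only: zmult_nat_diff)
qed

lemma zmult_uminus_left: "zmult (- x) a = - zmult x a"
  using zmult_add[of x "-x" a] by (simp add: eq_neg_iff_add_eq_0 add.commute)

lemma zmult_diff_left: "zmult (x - y) a = zmult x a - zmult y a"
  using zmult_add[of x "-y" a] zmult_uminus_left[of y a] by simp

lemma zmult_plus: "zmult z (a + b) = zmult z a + zmult z b"
  by (simp add: zmult_decomp nmult_plus algebra_simps)
lemma zmult_diff: "zmult z (a - b) = zmult z a - zmult z b"
  by (simp add: zmult_decomp nmult_diff algebra_simps)

lemma zmult_nmult: "zmult z (nmult n a) = zmult (z * int n) a"
proof -
  have "zmult z (nmult n a) = nmult (nat z * n) a - nmult (nat (-z) * n) a"
    by (simp add: zmult_decomp nmult_mult)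
  also have "\<dots> = zmult (int (nat z * n) - int (nat (-z) * n)) a"
    by (simp only: zmult_nat_diff)
  also have "int (nat z * n) - int (nat (-z) * n) = z * int n"
    by (cases "z \<ge> 0") (simp_all add: algebra_simps)
  finally show ?thesis .
qed

lemma zmult_mult: "zmult (x * y) a = zmult x (zmult y a)"
proof -
  have "zmult x (zmult y a) = zmult x (nmult (nat y) a) - zmult x (nmult (nat (-y)) a)"
    by (simp add: zmult_decomp[of y] zmult_diff)
  also have "\<dots> = zmult (x * int (nat y) - x * int (nat (-y))) a"
    by (simp add: zmult_nmult zmult_diff_left)
  also have "x * int (nat y) - x * int (nat (-y)) = x * y"
    by (cases "y \<ge> 0") (simp_all add: algebra_simps)
  finally show ?thesis by simp
qed

lemma zmult_sum: "zmult z (sum f S) = (\<Sum>x\<in>S. zmult z (f x))"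
  by (induction S rule: infinite_finite_induct) (simp_all add: zmult_plus)

section \<open>Subgroups and isolators\<close>

lemma subgrpD:
  assumes "subgrp H"
  shows "0 \<in> H" "x \<in> H \<Longrightarrow> y \<in> H \<Longrightarrow> x - y \<in> H"
  using assms unfolding subgrp_def by auto

lemma subgrp_uminus: "subgrp H \<Longrightarrow> x \<in> H \<Longrightarrow> - x \<in> H"
  using subgrpD(2)[of H 0 x] by (simp add: subgrpD)

lemma subgrp_add: "subgrp H \<Longrightarrow> x \<in> H \<Longrightarrow> y \<in> H \<Longrightarrow> x + y \<in> H"
  using subgrpD(2)[of H x "-y"] subgrp_uminus[of H y] by simp

lemma subgrp_diff: "subgrp H \<Longrightarrow> x \<in> H \<Longrightarrow> y \<in> H \<Longrightarrow> x - y \<in> H"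
  by (rule subgrpD(2))

lemma subgrp_diff_commute: "subgrp H \<Longrightarrow> x - y \<in> H \<Longrightarrow> y - x \<in> H"
  using subgrp_uminus[of H "x - y"] by simp

lemma subgrp_nmult: "subgrp H \<Longrightarrow> x \<in> H \<Longrightarrow> nmult n x \<in> H"
  by (induction n) (simp_all add: nmult_Suc subgrp_add subgrpD)

lemma subgrp_zmult: "subgrp H \<Longrightarrow> x \<in> H \<Longrightarrow> zmult z x \<in> H"
  by (simp add: zmult_decomp subgrp_diff subgrp_nmult)

lemma subgrp_UNIV [simp]: "subgrp UNIV" by (simp add: subgrp_def)

lemma subgrp_Int: "subgrp H \<Longrightarrow> subgrp K \<Longrightarrow> subgrp (H \<inter> K)"
  by (simp add: subgrp_def)

lemma subgrp_Inter: "(\<And>H. H \<in> \<H> \<Longrightarrow> subgrp H) \<Longrightarrow> subgrp (\<Inter>\<H>)"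
  by (simp add: subgrp_def)

lemma isol_mono: "X \<subseteq> Y \<Longrightarrow> isol X \<subseteq> isol Y"
  unfolding isol_def by blast

lemma subset_isol: "X \<subseteq> isol X"
  unfolding isol_def by (auto intro: exI[of _ 1])

lemma isol_subgrp:
  assumes "subgrp X" shows "subgrp (isol X)"
  unfolding subgrp_def
proof (intro conjI ballI)
  show "0 \<in> isol X" using assms subset_isol subgrpD(1) by blast
  fix x y assume "x \<in> isol X" "y \<in> isol X"
  then obtain n m where n: "n \<ge> 1" "nmult n x \<in> X" and m: "m \<ge> 1" "nmult m y \<in> X"
    unfolding isol_def by auto
  have "nmult (m * n) (x - y) = nmult m (nmult n x) - nmult n (nmult m y)"
    by (simp add: nmult_diff nmult_mult[symmetric] mult.commute)
  also have "\<dots> \<in> X" using n m assms by (simp add: subgrp_nmult subgrp_diff)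
  finally show "x - y \<in> isol X" unfolding isol_def using n m
    by (intro CollectI exI[of _ "m * n"]) (simp add: one_le_mult_iff)
qed

lemma isol_isol [simp]: "isol (isol X) = isol X"
proof
  show "isol (isol X) \<subseteq> isol X"
  proof
    fix x assume "x \<in> isol (isol X)"
    then obtain n m where "n \<ge> 1" "m \<ge> 1" "nmult m (nmult n x) \<in> X"
      unfolding isol_def by auto
    then show "x \<in> isol X" unfolding isol_def
      by (intro CollectI exI[of _ "m * n"]) (simp add: nmult_mult one_le_mult_iff)
  qed
qed (rule subset_isol)

lemma image_isol_subset:
  assumes "\<And>x y. s (x + y) = s x + s y"
  shows "s ` isol X \<subseteq> isol (s ` X)"
proof
  fix y assume "y \<in> s ` isol X"
  then obtain x n where "y = s x" "n \<ge> 1" "nmult n x \<in> X" unfolding isol_def by auto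
  then have "nmult n y \<in> s ` X" using additive_nmult[OF assms, of n x] by (metis image_eqI)
  then show "y \<in> isol (s ` X)" unfolding isol_def using \<open>n \<ge> 1\<close> by auto
qed

section \<open>The group algebra\<close>

abbreviation lookup where "lookup \<equiv> Poly_Mapping.lookup"
abbreviation keys where "keys \<equiv> Poly_Mapping.keys"
abbreviation single where "single \<equiv> Poly_Mapping.single"

lemma pm_single_expansion: "f = (\<Sum>a\<in>keys f. single a (lookup f a))"
  by (rule poly_mapping_eqI) (simp add: lookup_sum lookup_single when_def in_keys_iff)

lemma lookup_single_mult:
  fixes f :: "'a::ab_group_add \<Rightarrow>\<^sub>0 'k::comm_ring_1"
  shows "lookup (single a c * f) x = c * lookup f (x - a)"
proof -
  have "single a c * f = (\<Sum>b\<in>keys f. single (a + b) (c * lookup f b))"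
    by (subst pm_single_expansion[of f]) (simp add: sum_distrib_left mult_single)
  moreover have "\<And>b. (a + b = x) = (b = x - a)" by (auto simp: algebra_simps)
  ultimately have "lookup (single a c * f) x = (\<Sum>b\<in>keys f. (if b = x - a then c * lookup f b else 0))"
    by (simp add: lookup_sum lookup_single when_def)
  then show ?thesis by (simp add: in_keys_iff)
qed

definition proj :: "'a set \<Rightarrow> ('a \<Rightarrow>\<^sub>0 'k::zero) \<Rightarrow> ('a \<Rightarrow>\<^sub>0 'k)" where
  "proj H f = Abs_poly_mapping (\<lambda>a. if a \<in> H then lookup f a else 0)"

lemma lookup_proj: "lookup (proj H f) a = (if a \<in> H then lookup f a else 0)"
proof -
  have "finite {a. (if a \<in> H then lookup f a else 0) \<noteq> 0}"
    by (rule finite_subset[OF _ finite_lookup[of f]]) auto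
  then show ?thesis unfolding proj_def by simp
qed

lemma keys_proj: "keys (proj H f) = keys f \<inter> H"
  by (auto simp: in_keys_iff lookup_proj split: if_splits)

lemma proj_add: "proj H (f + g) = proj H f + proj H (g :: 'a \<Rightarrow>\<^sub>0 'k::monoid_add)"
  by (rule poly_mapping_eqI) (simp add: lookup_proj lookup_add)

lemma proj_0 [simp]: "proj H 0 = 0"
  by (rule poly_mapping_eqI) (simp add: lookup_proj)

lemma proj_sum: "proj H (sum g S) = (\<Sum>x\<in>S. proj H (g x :: 'a \<Rightarrow>\<^sub>0 'k::comm_monoid_add))"
  by (induction S rule: infinite_finite_induct) (simp_all add: proj_add)

lemma proj_id: "keys f \<subseteq> H \<Longrightarrow> proj H f = f"
  by (rule poly_mapping_eqI) (auto simp: lookup_proj in_keys_iff)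

lemma proj_Int: "proj (H \<inter> K) f = proj H (proj K f)"
  by (rule poly_mapping_eqI) (simp add: lookup_proj)

lemma proj_cong:
  assumes "keys f \<inter> H = keys f \<inter> K" shows "proj H f = proj K f"
proof (rule poly_mapping_eqI)
  fix k
  show "lookup (proj H f) k = lookup (proj K f) k"
  proof (cases "k \<in> keys f")
    case True
    then have "(k \<in> H) = (k \<in> K)" using assms by blast
    then show ?thesis by (simp add: lookup_proj)
  next
    case False
    then show ?thesis by (simp add: lookup_proj in_keys_iff)
  qed
qed

lemma proj_single_mult:
  fixes f :: "'a::ab_group_add \<Rightarrow>\<^sub>0 'k::comm_ring_1"
  assumes "subgrp H" "a \<in> H"
  shows "proj H (single a c * f) = single a c * proj H f"
proof (rule poly_mapping_eqI)
  fix x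
  have "(x \<in> H) = (x - a \<in> H)"
    using assms by (metis diff_add_cancel subgrp_add subgrp_diff)
  then show "lookup (proj H (single a c * f)) x = lookup (single a c * proj H f) x"
    by (simp add: lookup_proj lookup_single_mult)
qed

lemma proj_mult_left:
  fixes f h :: "'a::ab_group_add \<Rightarrow>\<^sub>0 'k::comm_ring_1"
  assumes "subgrp H" "keys h \<subseteq> H"
  shows "proj H (h * f) = h * proj H f"
proof -
  have "proj H (h * f) = proj H ((\<Sum>a\<in>keys h. single a (lookup h a)) * f)"
    by (subst pm_single_expansion[of h]) simp
  also have "\<dots> = (\<Sum>a\<in>keys h. single a (lookup h a) * proj H f)"
    using assms by (simp add: sum_distrib_right proj_sum proj_single_mult subset_iff)
  also have "\<dots> = h * proj H f"
    by (subst (2) pm_single_expansion[of h]) (simp add: sum_distrib_right)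
  finally show ?thesis .
qed

lemma proj_single_mult_in_subgrp:
  fixes h :: "'a::ab_group_add \<Rightarrow>\<^sub>0 'k::comm_ring_1"
  assumes H: "subgrp H" and h: "keys h \<subseteq> H"
  shows "proj H (single a 1 * h) = (if a \<in> H then single a 1 * h else 0)"
proof (cases "a \<in> H")
  case True
  then show ?thesis using proj_single_mult[OF H True, of 1 h] proj_id[OF h] by simp
next
  case False
  have "lookup h (x - a) = 0" if "x \<in> H" for x
  proof -
    have "x - (x - a) \<notin> H" using False by simp
    then have "x - a \<notin> H" using subgrp_diff[OF H that] by blast
    then show ?thesis using h by (meson in_keys_iff subsetD)
  qed
  then have "proj H (single a 1 * h) = 0"
    by (intro poly_mapping_eqI) (simp add: lookup_proj lookup_single_mult)
  then show ?thesis using False by simp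
qed

lemma galg_iff: "f \<in> galg B \<longleftrightarrow> keys f \<subseteq> B" by (simp add: galg_def)

lemma galg_UNIV [simp]: "galg UNIV = UNIV" by (simp add: galg_def)

lemma galg_0 [simp]: "0 \<in> galg B" by (simp add: galg_def)

lemma galg_add: "f \<in> galg B \<Longrightarrow> g \<in> galg B \<Longrightarrow> f + g \<in> galg B"
  unfolding galg_def mem_Collect_eq using keys_add[of f g] by blast

lemma galg_diff: "f \<in> galg B \<Longrightarrow> g \<in> galg B \<Longrightarrow> f - (g :: 'a \<Rightarrow>\<^sub>0 'k::ab_group_add) \<in> galg B"
  unfolding galg_def using keys_add[of f "- g"] by (auto simp: keys_minus)

lemma galg_single: "a \<in> B \<Longrightarrow> single a c \<in> galg B"
  by (simp add: galg_def)

lemma galg_mult: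
  fixes f g :: "'a::ab_group_add \<Rightarrow>\<^sub>0 'k::comm_ring_1"
  assumes "subgrp B" "f \<in> galg B" "g \<in> galg B"
  shows "f * g \<in> galg B"
proof -
  have "keys (f * g) \<subseteq> B"
  proof
    fix x assume "x \<in> keys (f * g)"
    then obtain a b where "x = a + b" "a \<in> keys f" "b \<in> keys g" using keys_mult[of f g] by blast
    then show "x \<in> B" using assms unfolding galg_def by (auto intro: subgrp_add)
  qed
  then show ?thesis by (simp add: galg_def)
qed

lemma galg_one: "subgrp B \<Longrightarrow> (1 :: 'a::ab_group_add \<Rightarrow>\<^sub>0 'k::comm_ring_1) \<in> galg B"
  by (simp add: galg_def subgrpD(1))

lemma galg_proj: "keys f \<inter> H \<subseteq> B \<Longrightarrow> proj H f \<in> galg B"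
  by (simp add: galg_def keys_proj)

lemma galg_mono: "B \<subseteq> C \<Longrightarrow> galg B \<subseteq> galg C"
  by (auto simp: galg_def)

lemma exists_coset_transversal:
  assumes H: "subgrp H" and X: "finite X"
  shows "\<exists>T. finite T \<and> T \<subseteq> X \<and> (\<forall>t\<in>T. \<forall>t'\<in>T. t - t' \<in> H \<longrightarrow> t = t') \<and> (\<forall>a\<in>X. \<exists>t\<in>T. a - t \<in> H)"
  using X
proof (induction X rule: finite_induct)
  case (insert x X)
  then obtain T where T: "finite T" "T \<subseteq> X" "\<forall>t\<in>T. \<forall>t'\<in>T. t - t' \<in> H \<longrightarrow> t = t'"
    "\<forall>a\<in>X. \<exists>t\<in>T. a - t \<in> H" by blast
  show ?case
  proof (cases "\<exists>t\<in>T. x - t \<in> H")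
    case True
    then have "\<forall>a\<in>insert x X. \<exists>t\<in>T. a - t \<in> H" using T(4) by blast
    moreover have "T \<subseteq> insert x X" using T(2) by blast
    ultimately show ?thesis using T(1,3) by blast
  next
    case False
    then have x: "\<forall>t\<in>T. t - x \<notin> H" using subgrp_diff_commute[OF H] by blast
    have "\<forall>t\<in>insert x T. \<forall>t'\<in>insert x T. t - t' \<in> H \<longrightarrow> t = t'"
    proof (intro ballI impI)
      fix t t' assume "t \<in> insert x T" "t' \<in> insert x T" "t - t' \<in> H"
      then show "t = t'" using T(3) False x by auto
    qed
    moreover have "\<forall>a\<in>insert x X. \<exists>t\<in>insert x T. a - t \<in> H"
      using T(4) subgrpD(1)[OF H] by auto
    moreover have "finite (insert x T)" "insert x T \<subseteq> insert x X" using T(1,2) by auto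
    ultimately show ?thesis by blast
  qed
qed simp

lemma coset_decomposition:
  fixes f :: "'a::ab_group_add \<Rightarrow>\<^sub>0 'k::comm_ring_1"
  assumes H: "subgrp H" and T: "finite T" "\<forall>t\<in>T. \<forall>t'\<in>T. t - t' \<in> H \<longrightarrow> t = t'"
    and cover: "\<forall>a\<in>keys f. \<exists>t\<in>T. a - t \<in> H"
  shows "f = (\<Sum>t\<in>T. single t 1 * proj H (single (- t) 1 * f))"
proof (rule poly_mapping_eqI)
  fix x
  have "lookup (single t 1 * proj H (single (- t) 1 * f)) x = (if x - t \<in> H then lookup f x else 0)"
    for t
    using lookup_single_mult[of t 1 "proj H (single (- t) 1 * f)" x]
      lookup_single_mult[of "- t" 1 f "x - t"] by (simp add: lookup_proj)
  then have "lookup (\<Sum>t\<in>T. single t 1 * proj H (single (- t) 1 * f)) x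
      = (\<Sum>t\<in>T. if x - t \<in> H then lookup f x else 0)"
    by (simp add: lookup_sum)
  also have "\<dots> = lookup f x"
  proof (cases "x \<in> keys f")
    case True
    then obtain t0 where t0: "t0 \<in> T" "x - t0 \<in> H" using cover by blast
    have "x - t \<in> H \<longleftrightarrow> t = t0" if "t \<in> T" for t
    proof
      assume "x - t \<in> H"
      then have "(x - t0) - (x - t) \<in> H" by (rule subgrp_diff[OF H t0(2)])
      then show "t = t0" using T(2) that t0(1) by simp
    qed (use t0 in simp)
    then have "(\<Sum>t\<in>T. if x - t \<in> H then lookup f x else 0) = (\<Sum>t\<in>T. if t = t0 then lookup f x else 0)"
      by (intro sum.cong) auto
    also have "\<dots> = lookup f x" using T(1) t0(1) by simp
    finally show ?thesis .
  next
    case False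
    then have "lookup f x = 0" by (simp add: in_keys_iff)
    then show ?thesis by (simp only: if_cancel sum.neutral_const)
  qed
  finally show "lookup f x = lookup (\<Sum>t\<in>T. single t 1 * proj H (single (- t) 1 * f)) x" ..
qed

lemma exists_coset_decomposition:
  fixes f :: "'a::ab_group_add \<Rightarrow>\<^sub>0 'k::comm_ring_1"
  assumes "subgrp H"
  obtains T where "finite T" "T \<subseteq> keys f" "\<forall>t\<in>T. \<forall>t'\<in>T. t - t' \<in> H \<longrightarrow> t = t'"
    "\<forall>a\<in>keys f. \<exists>t\<in>T. a - t \<in> H" "f = (\<Sum>t\<in>T. single t 1 * proj H (single (- t) 1 * f))"
  using exists_coset_transversal[OF assms finite_keys[of f]] coset_decomposition[OF assms] by blast

section \<open>Ideals and control\<close>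

lemma ideal_in_sum:
  assumes "is_ideal_in R I" "\<And>x. x \<in> S \<Longrightarrow> g x \<in> I"
  shows "sum g S \<in> I"
  using assms(2) by (induction S rule: infinite_finite_induct) (use assms(1) in \<open>auto simp: is_ideal_in_def\<close>)

lemma ideal_in_mult_left: "is_ideal_in R I \<Longrightarrow> x \<in> I \<Longrightarrow> r \<in> R \<Longrightarrow> r * x \<in> I"
  unfolding is_ideal_in_def by blast

lemma ideal_in_mult_right: "is_ideal_in R I \<Longrightarrow> x \<in> I \<Longrightarrow> r \<in> R \<Longrightarrow> x * r \<in> I"
  using ideal_in_mult_left[of R I x r] by (simp add: mult.commute)

lemma ideal_in_subset: "is_ideal_in R I \<Longrightarrow> I \<subseteq> R"
  by (simp add: is_ideal_in_def)

lemma is_idealD: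
  assumes "is_ideal I"
  shows "0 \<in> I" "x \<in> I \<Longrightarrow> y \<in> I \<Longrightarrow> x + y \<in> I" "x \<in> I \<Longrightarrow> r * x \<in> I"
    "x \<in> I \<Longrightarrow> x * r \<in> I"
  using assms unfolding is_ideal_def is_ideal_in_def by (auto simp: mult.commute)

lemma is_ideal_diff: "is_ideal I \<Longrightarrow> x \<in> I \<Longrightarrow> y \<in> I \<Longrightarrow> x - y \<in> I"
  using is_idealD(2)[of I x "- y"] is_idealD(3)[of I y "- 1"] by simp

lemma is_ideal_add_cancel: "is_ideal I \<Longrightarrow> y \<in> I \<Longrightarrow> x + y \<in> I \<Longrightarrow> x \<in> I"
  using is_ideal_diff[of I "x + y" y] by simp

lemma is_ideal_sum: "is_ideal I \<Longrightarrow> (\<And>x. x \<in> S \<Longrightarrow> g x \<in> I) \<Longrightarrow> sum g S \<in> I"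
  unfolding is_ideal_def by (rule ideal_in_sum)

lemma prime_idealD:
  assumes "prime_ideal P"
  shows "is_ideal P" "x * y \<in> P \<Longrightarrow> x \<notin> P \<Longrightarrow> y \<in> P" "1 \<notin> P"
  using assms is_idealD(3)[of P 1] by (auto simp: prime_ideal_def)

lemma prime_ideal_mult_notin: "prime_ideal P \<Longrightarrow> x \<notin> P \<Longrightarrow> y \<notin> P \<Longrightarrow> x * y \<notin> P"
  using prime_idealD(2) by blast

lemma is_ideal_in_galg_Int:
  fixes P :: "('a::ab_group_add \<Rightarrow>\<^sub>0 'k::comm_ring_1) set"
  assumes "is_ideal P" "subgrp B"
  shows "is_ideal_in (galg B) (galg B \<inter> P)"
  unfolding is_ideal_in_def using assms by (auto simp: galg_add galg_mult is_idealD)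

lemma ideal_gen_in_sum:
  assumes "finite T" "\<And>t. t \<in> T \<Longrightarrow> x t \<in> S" "\<And>t. t \<in> T \<Longrightarrow> y t \<in> R"
  shows "(\<Sum>t\<in>T. x t * y t) \<in> ideal_gen_in R S"
proof -
  obtain h where h: "bij_betw h {..<card T} T"
    using ex_bij_betw_nat_finite[OF assms(1)] by (auto simp: atLeast0LessThan)
  have "(\<Sum>t\<in>T. x t * y t) = (\<Sum>i<card T. x (h i) * y (h i))"
    using sum.reindex_bij_betw[OF h, of "\<lambda>t. x t * y t"] by simp
  moreover have "\<forall>i<card T. x (h i) \<in> S \<and> y (h i) \<in> R"
    using h assms(2,3) bij_betwE by fastforce
  ultimately show ?thesis unfolding ideal_gen_in_def
    by (intro CollectI exI[of _ "card T"] exI[of _ "\<lambda>i. x (h i)"] exI[of _ "\<lambda>i. y (h i)"]) auto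
qed

lemma ideal_gen_in_subset:
  assumes "is_ideal_in R I" "S \<subseteq> I"
  shows "ideal_gen_in R S \<subseteq> I"
proof
  fix f assume "f \<in> ideal_gen_in R S"
  then obtain n :: nat and x y where xy: "\<forall>i<n. x i \<in> S \<and> y i \<in> R" "f = (\<Sum>i<n. x i * y i)"
    unfolding ideal_gen_in_def by blast
  have "x i * y i \<in> I" if "i < n" for i
    using xy(1) that assms by (auto intro: ideal_in_mult_right)
  then show "f \<in> I" unfolding xy(2) using assms(1) by (intro ideal_in_sum) auto
qed

lemma ideal_gen_in_base: "1 \<in> R \<Longrightarrow> s \<in> S \<Longrightarrow> s \<in> ideal_gen_in R S"
  unfolding ideal_gen_in_def
  by (intro CollectI exI[of _ 1] exI[of _ "\<lambda>i. s"] exI[of _ "\<lambda>i. 1"]) auto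

lemma ideal_gen_in_mono: "R \<subseteq> R' \<Longrightarrow> S \<subseteq> S' \<Longrightarrow> ideal_gen_in R S \<subseteq> ideal_gen_in R' S'"
  unfolding ideal_gen_in_def by blast

lemma is_ideal_ideal_gen_in_UNIV: "is_ideal (ideal_gen_in UNIV S)"
  unfolding is_ideal_def is_ideal_in_def
proof (intro conjI ballI subset_UNIV)
  show "0 \<in> ideal_gen_in UNIV S" using ideal_gen_in_sum[of "{}"] by simp
next
  fix f g assume "f \<in> ideal_gen_in UNIV S" "g \<in> ideal_gen_in UNIV S"
  then obtain n m :: nat and x y x' y' where
    f: "\<forall>i<n. x i \<in> S" "f = (\<Sum>i<n. x i * y i)" and g: "\<forall>i<m. x' i \<in> S" "g = (\<Sum>i<m. x' i * y' i)"
    unfolding ideal_gen_in_def by blast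
  have "f + g = (\<Sum>t\<in>{..<n} <+> {..<m}. case_sum x x' t * case_sum y y' t)"
    unfolding f(2) g(2) by (simp add: sum.Plus comp_def)
  also have "\<dots> \<in> ideal_gen_in UNIV S" using f(1) g(1) by (intro ideal_gen_in_sum) auto
  finally show "f + g \<in> ideal_gen_in UNIV S" .
next
  fix f r assume "f \<in> ideal_gen_in UNIV S"
  then obtain n :: nat and x y where f: "\<forall>i<n. x i \<in> S" "f = (\<Sum>i<n. x i * y i)"
    unfolding ideal_gen_in_def by blast
  have "r * f = (\<Sum>i\<in>{..<n}. x i * (r * y i))"
    unfolding f(2) by (simp add: sum_distrib_left mult.left_commute)
  also have "\<dots> \<in> ideal_gen_in UNIV S" using f(1) by (intro ideal_gen_in_sum) auto
  finally show "r * f \<in> ideal_gen_in UNIV S" .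
qed

lemma mem_ideal_gen_in_if_proj_closed:
  fixes J :: "('a::ab_group_add \<Rightarrow>\<^sub>0 'k::comm_ring_1) set"
  assumes B: "subgrp B" and J: "is_ideal_in (galg B) J" and H: "subgrp H"
    and closed: "\<forall>g\<in>J. proj H g \<in> J" and f: "f \<in> J"
  shows "f \<in> ideal_gen_in (galg B) (J \<inter> galg H)"
proof -
  obtain T where T: "finite T" "T \<subseteq> keys f" "\<forall>t\<in>T. \<forall>t'\<in>T. t - t' \<in> H \<longrightarrow> t = t'"
    "\<forall>a\<in>keys f. \<exists>t\<in>T. a - t \<in> H" "f = (\<Sum>t\<in>T. single t 1 * proj H (single (- t) 1 * f))"
    by (rule exists_coset_decomposition[OF H])
  have "f \<in> galg B" using f ideal_in_subset[OF J] by blast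
  then have "keys f \<subseteq> B" by (simp add: galg_iff)
  then have TB: "T \<subseteq> B" using T(2) by blast
  have "f = (\<Sum>t\<in>T. proj H (single (- t) 1 * f) * single t 1)"
    using T(5) by (simp add: mult.commute)
  also have "\<dots> \<in> ideal_gen_in (galg B) (J \<inter> galg H)"
  proof (rule ideal_gen_in_sum[OF T(1)])
    fix t assume "t \<in> T"
    then have t: "t \<in> B" "- t \<in> B" using TB subgrp_uminus[OF B] by auto
    then have "single (- t) 1 * f \<in> J" using ideal_in_mult_left[OF J f galg_single] by blast
    then show "proj H (single (- t) 1 * f) \<in> J \<inter> galg H"
      using closed by (simp add: galg_iff keys_proj)
    show "single t 1 \<in> galg B" using t(1) by (rule galg_single)
  qed
  finally show ?thesis .
qed

lemma controls_iff_proj: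
  fixes J :: "('a::ab_group_add \<Rightarrow>\<^sub>0 'k::comm_ring_1) set"
  assumes B: "subgrp B" and J: "is_ideal_in (galg B) J" and H: "subgrp H" "H \<subseteq> B"
  shows "controls B J H \<longleftrightarrow> (\<forall>f\<in>J. proj H f \<in> J)"
proof
  assume c: "controls B J H"
  show "\<forall>f\<in>J. proj H f \<in> J"
  proof
    fix f assume "f \<in> J"
    then have "f \<in> ideal_gen_in (galg B) (J \<inter> galg H)" using c unfolding controls_def by simp
    then obtain n :: nat and x y where xy: "\<forall>i<n. x i \<in> J \<inter> galg H \<and> y i \<in> galg B"
      "f = (\<Sum>i<n. x i * y i)"
      unfolding ideal_gen_in_def by blast
    have "proj H f = (\<Sum>i<n. x i * proj H (y i))"
      unfolding xy(2) proj_sum using xy(1) H(1)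
      by (intro sum.cong refl proj_mult_left) (auto simp: galg_iff)
    also have "\<dots> \<in> J"
    proof (rule ideal_in_sum[OF J])
      fix i assume "i \<in> {..<n}"
      then show "x i * proj H (y i) \<in> J"
        using xy(1) H(2) by (intro ideal_in_mult_right[OF J]) (auto intro: galg_proj)
    qed
    finally show "proj H f \<in> J" .
  qed
next
  assume "\<forall>f\<in>J. proj H f \<in> J"
  then have "J \<subseteq> ideal_gen_in (galg B) (J \<inter> galg H)"
    using mem_ideal_gen_in_if_proj_closed[OF B J H(1)] by blast
  moreover have "ideal_gen_in (galg B) (J \<inter> galg H) \<subseteq> J"
    using J by (rule ideal_gen_in_subset) auto
  ultimately show "controls B J H" unfolding controls_def by blast
qed

lemma controls_mono:
  fixes J :: "('a::ab_group_add \<Rightarrow>\<^sub>0 'k::comm_ring_1) set"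
  assumes J: "is_ideal_in (galg B) J" and c: "controls B J D" and DH: "D \<subseteq> H"
  shows "controls B J H"
proof -
  have "J \<subseteq> ideal_gen_in (galg B) (J \<inter> galg H)"
    using c ideal_gen_in_mono[OF order_refl, of "J \<inter> galg D" "J \<inter> galg H" "galg B"] galg_mono[OF DH]
    unfolding controls_def by blast
  moreover have "ideal_gen_in (galg B) (J \<inter> galg H) \<subseteq> J" using J by (rule ideal_gen_in_subset) auto
  ultimately show ?thesis unfolding controls_def by blast
qed

lemma controls_self:
  fixes J :: "('a::ab_group_add \<Rightarrow>\<^sub>0 'k::comm_ring_1) set"
  assumes B: "subgrp B" and J: "is_ideal_in (galg B) J"
  shows "controls B J B"
proof -
  have "J \<subseteq> ideal_gen_in (galg B) (J \<inter> galg B)"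
    using ideal_in_subset[OF J] ideal_gen_in_base[OF galg_one[OF B]] by blast
  moreover have "ideal_gen_in (galg B) (J \<inter> galg B) \<subseteq> J" using J by (rule ideal_gen_in_subset) auto
  ultimately show ?thesis unfolding controls_def by blast
qed

lemma controller_subgrp: "subgrp (controller B J)"
  unfolding controller_def by (rule subgrp_Inter) auto

lemma controller_subset:
  fixes J :: "('a::ab_group_add \<Rightarrow>\<^sub>0 'k::comm_ring_1) set"
  assumes "subgrp B" "is_ideal_in (galg B) J"
  shows "controller B J \<subseteq> B"
  unfolding controller_def using controls_self[OF assms] assms(1) by blast

lemma controller_least: "subgrp H \<Longrightarrow> H \<subseteq> B \<Longrightarrow> controls B J H \<Longrightarrow> controller B J \<subseteq> H"
  unfolding controller_def by blast

lemma proj_Inter_controlling_mem: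
  fixes J :: "('a::ab_group_add \<Rightarrow>\<^sub>0 'k::comm_ring_1) set"
  assumes B: "subgrp B" and J: "is_ideal_in (galg B) J"
    and S: "finite S" "\<forall>H\<in>S. subgrp H \<and> H \<subseteq> B \<and> controls B J H" and f: "f \<in> J"
  shows "proj (B \<inter> \<Inter>S) f \<in> J"
  using S
proof (induction S rule: finite_induct)
  case empty
  then show ?case using f ideal_in_subset[OF J] by (auto simp: galg_iff proj_id)
next
  case (insert H S)
  then have "proj H (proj (B \<inter> \<Inter>S) f) \<in> J" using controls_iff_proj[OF B J] by blast
  moreover have "B \<inter> \<Inter>(insert H S) = H \<inter> (B \<inter> \<Inter>S)" by auto
  ultimately show ?case by (simp add: proj_Int)
qed

text \<open>Only the finitely many keys of \<open>f\<close> matter for the projection onto an intersection.\<close>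

lemma proj_Inter_eq_finite:
  assumes "B \<in> \<F>"
  obtains S where "finite S" "S \<subseteq> \<F>" "proj (\<Inter>\<F>) f = proj (B \<inter> \<Inter>S) f"
proof -
  have "\<forall>a\<in>keys f - \<Inter>\<F>. \<exists>H\<in>\<F>. a \<notin> H" by blast
  then obtain h where h: "\<And>a. a \<in> keys f - \<Inter>\<F> \<Longrightarrow> h a \<in> \<F> \<and> a \<notin> h a" by metis
  define S where "S = h ` (keys f - \<Inter>\<F>)"
  have "keys f \<inter> \<Inter>\<F> = keys f \<inter> (B \<inter> \<Inter>S)"
  proof
    show "keys f \<inter> \<Inter>\<F> \<subseteq> keys f \<inter> (B \<inter> \<Inter>S)"
      using h assms unfolding S_def by blast
    show "keys f \<inter> (B \<inter> \<Inter>S) \<subseteq> keys f \<inter> \<Inter>\<F>"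
    proof
      fix a assume a: "a \<in> keys f \<inter> (B \<inter> \<Inter>S)"
      show "a \<in> keys f \<inter> \<Inter>\<F>"
      proof (rule ccontr)
        assume "a \<notin> keys f \<inter> \<Inter>\<F>"
        then have "a \<in> keys f - \<Inter>\<F>" using a by blast
        then have "h a \<in> S" "a \<notin> h a" using h unfolding S_def by auto
        then show False using a by blast
      qed
    qed
  qed
  then have "proj (\<Inter>\<F>) f = proj (B \<inter> \<Inter>S) f" by (rule proj_cong)
  moreover have "finite S" "S \<subseteq> \<F>" using h unfolding S_def by auto
  ultimately show ?thesis by (rule that[rotated 2])
qed

lemma controller_controls:
  fixes J :: "('a::ab_group_add \<Rightarrow>\<^sub>0 'k::comm_ring_1) set"
  assumes B: "subgrp B" and J: "is_ideal_in (galg B) J"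
  shows "controls B J (controller B J)"
proof -
  define \<F> where "\<F> = {H. subgrp H \<and> H \<subseteq> B \<and> controls B J H}"
  have "B \<in> \<F>" unfolding \<F>_def using controls_self[OF B J] B by simp
  have "proj (\<Inter>\<F>) f \<in> J" if f: "f \<in> J" for f
  proof -
    obtain S where S: "finite S" "S \<subseteq> \<F>" "proj (\<Inter>\<F>) f = proj (B \<inter> \<Inter>S) f"
      using proj_Inter_eq_finite[OF \<open>B \<in> \<F>\<close>] by blast
    have "\<forall>H\<in>S. subgrp H \<and> H \<subseteq> B \<and> controls B J H" using S(2) unfolding \<F>_def by blast
    then show ?thesis using proj_Inter_controlling_mem[OF B J S(1) _ f] S(3) by simp
  qed
  moreover have "controller B J = \<Inter>\<F>" unfolding controller_def \<F>_def by simp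
  ultimately show ?thesis
    using controls_iff_proj[OF B J controller_subgrp controller_subset[OF B J]] by simp
qed

section \<open>Incomparability over a dense subgroup\<close>

text \<open>Gaussian elimination of the generator \<open>g t\<^sub>0\<close> from two congruences modulo \<open>J\<close>.\<close>

lemma eliminate_generator:
  assumes J: "is_ideal J" and T: "finite T" "t0 \<notin> T"
    and r: "v j - (\<Sum>t\<in>insert t0 T. c j t * g t) \<in> J" and r0: "v j0 - (\<Sum>t\<in>insert t0 T. c j0 t * g t) \<in> J"
  shows "(c j0 t0 * v j - c j t0 * v j0) - (\<Sum>t\<in>T. (c j0 t0 * c j t - c j t0 * c j0 t) * g t) \<in> J"
proof -
  have "(c j0 t0 * v j - c j t0 * v j0) - (\<Sum>t\<in>T. (c j0 t0 * c j t - c j t0 * c j0 t) * g t)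
      = c j0 t0 * (v j - (\<Sum>t\<in>insert t0 T. c j t * g t)) - c j t0 * (v j0 - (\<Sum>t\<in>insert t0 T. c j0 t * g t))"
    using T by (simp add: algebra_simps sum_subtractf sum_distrib_left)
  also have "\<dots> \<in> J" by (rule is_ideal_diff[OF J is_idealD(3)[OF J r] is_idealD(3)[OF J r0]])
  finally show ?thesis .
qed

locale subring_mod_prime =
  fixes S :: "'r::comm_ring_1 set" and J :: "'r set"
  assumes prime: "prime_ideal J"
    and mult_closed: "a \<in> S \<Longrightarrow> b \<in> S \<Longrightarrow> a * b \<in> S"
    and diff_closed: "a \<in> S \<Longrightarrow> b \<in> S \<Longrightarrow> a - b \<in> S"
    and one_closed: "1 \<in> S"
begin

lemma zero_closed: "0 \<in> S"
  using diff_closed[OF one_closed one_closed] by simp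

lemma uminus_closed: "a \<in> S \<Longrightarrow> - a \<in> S"
  using diff_closed[OF zero_closed, of a] by simp

lemma sum_closed: "(\<And>x. x \<in> X \<Longrightarrow> f x \<in> S) \<Longrightarrow> sum f X \<in> S"
proof (induction X rule: infinite_finite_induct)
  case (insert x X)
  then show ?case using diff_closed[of "f x" "- sum f X"] uminus_closed[of "sum f X"] by simp
qed (simp_all add: zero_closed)

lemma dependence_extend:
  assumes I: "finite I" "j0 \<in> I" and \<kappa>: "\<kappa> \<in> S" "\<kappa> \<notin> J" and d: "\<forall>j\<in>I. d j \<in> S"
    and s': "\<forall>j\<in>I - {j0}. s' j \<in> S" "\<exists>j\<in>I - {j0}. s' j \<notin> J"
      "(\<Sum>j\<in>I - {j0}. s' j * (\<kappa> * v j - d j * v j0)) \<in> J"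
  shows "\<exists>s. (\<forall>j\<in>I. s j \<in> S) \<and> (\<exists>j\<in>I. s j \<notin> J) \<and> (\<Sum>j\<in>I. s j * v j) \<in> J"
proof -
  define s where "s j = (if j = j0 then - (\<Sum>i\<in>I - {j0}. s' i * d i) else s' j * \<kappa>)" for j
  have "(\<Sum>j\<in>I. s j * v j) = s j0 * v j0 + (\<Sum>j\<in>I - {j0}. s j * v j)"
    using I by (simp add: sum.remove)
  also have "(\<Sum>j\<in>I - {j0}. s j * v j) = (\<Sum>j\<in>I - {j0}. s' j * \<kappa> * v j)"
    unfolding s_def by (intro sum.cong) auto
  also have "s j0 * v j0 + (\<Sum>j\<in>I - {j0}. s' j * \<kappa> * v j) = (\<Sum>j\<in>I - {j0}. s' j * (\<kappa> * v j - d j * v j0))"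
    unfolding s_def by (simp add: algebra_simps sum_subtractf sum_distrib_left sum_distrib_right)
  finally have "(\<Sum>j\<in>I. s j * v j) \<in> J" using s'(3) by simp
  moreover have "\<forall>j\<in>I. s j \<in> S"
    using s'(1) d \<kappa>(1) by (auto simp: s_def intro!: uminus_closed sum_closed mult_closed)
  moreover obtain j1 where "j1 \<in> I - {j0}" "s' j1 \<notin> J" using s'(2) by blast
  then have "j1 \<in> I" "s j1 \<notin> J" using prime_ideal_mult_notin[OF prime _ \<kappa>(2)] by (auto simp: s_def)
  ultimately show ?thesis by blast
qed

lemma linear_dependence:
  assumes "finite T" "finite I" "card T < card I"
    and "\<forall>j\<in>I. \<forall>t\<in>T. c j t \<in> S" "\<forall>j\<in>I. v j - (\<Sum>t\<in>T. c j t * g t) \<in> J"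
  shows "\<exists>s. (\<forall>j\<in>I. s j \<in> S) \<and> (\<exists>j\<in>I. s j \<notin> J) \<and> (\<Sum>j\<in>I. s j * v j) \<in> J"
  using assms
proof (induction T arbitrary: I v c rule: finite_induct)
  case empty
  then obtain j0 where j0: "j0 \<in> I" by fastforce
  define s where "s j = (if j = j0 then 1 else (0 :: 'r))" for j
  have "(\<Sum>j\<in>I. s j * v j) = (\<Sum>j\<in>I. if j = j0 then v j else 0)"
    unfolding s_def by (intro sum.cong) auto
  also have "\<dots> = v j0" using empty.prems(1) j0 by simp
  finally have "(\<Sum>j\<in>I. s j * v j) \<in> J" using empty.prems(4) j0 by simp
  moreover have "s j0 \<notin> J" using prime_idealD(3)[OF prime] by (simp add: s_def)
  moreover have "\<forall>j\<in>I. s j \<in> S" using zero_closed one_closed by (simp add: s_def)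
  ultimately show ?case using j0 by blast
next
  case (insert t0 T)
  have Jid: "is_ideal J" using prime_idealD(1)[OF prime] .
  have split: "v j - (\<Sum>t\<in>insert t0 T. c j t * g t) = v j - c j t0 * g t0 - (\<Sum>t\<in>T. c j t * g t)" for j
    using insert.hyps by (simp add: algebra_simps)
  show ?case
  proof (cases "\<forall>j\<in>I. c j t0 \<in> J")
    case True
    have "v j - (\<Sum>t\<in>T. c j t * g t) \<in> J" if j: "j \<in> I" for j
    proof -
      have "v j - (\<Sum>t\<in>T. c j t * g t) = (v j - (\<Sum>t\<in>insert t0 T. c j t * g t)) + c j t0 * g t0"
        using split[of j] by (simp add: algebra_simps)
      also have "\<dots> \<in> J" using insert.prems(4) j True Jid by (intro is_idealD(2) is_idealD(4)) auto
      finally show ?thesis .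
    qed
    then show ?thesis using insert.IH[of I c v] insert.prems(1-3) insert.hyps by simp
  next
    case False
    then obtain j0 where j0: "j0 \<in> I" "c j0 t0 \<notin> J" by blast
    define \<kappa> where "\<kappa> = c j0 t0"
    have \<kappa>: "\<kappa> \<in> S" "\<kappa> \<notin> J" using insert.prems(3) j0 by (simp_all add: \<kappa>_def)
    have "card T < card (I - {j0})" using insert.prems(1,2) insert.hyps j0(1) by simp
    moreover have "\<forall>j\<in>I - {j0}. \<forall>t\<in>T. \<kappa> * c j t - c j t0 * c j0 t \<in> S"
      using insert.prems(3) j0(1) \<kappa>(1) by (auto intro!: diff_closed mult_closed)
    moreover have "\<forall>j\<in>I - {j0}. (\<kappa> * v j - c j t0 * v j0) - (\<Sum>t\<in>T. (\<kappa> * c j t - c j t0 * c j0 t) * g t) \<in> J"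
      using insert.prems(4) insert.hyps j0(1) unfolding \<kappa>_def by (auto intro: eliminate_generator[OF Jid])
    ultimately obtain s' where "\<forall>j\<in>I - {j0}. s' j \<in> S" "\<exists>j\<in>I - {j0}. s' j \<notin> J"
      "(\<Sum>j\<in>I - {j0}. s' j * (\<kappa> * v j - c j t0 * v j0)) \<in> J"
      using insert.IH[of "I - {j0}" "\<lambda>j t. \<kappa> * c j t - c j t0 * c j0 t" "\<lambda>j. \<kappa> * v j - c j t0 * v j0"]
        insert.prems(1) by auto
    then show ?thesis using insert.prems(1,3) j0(1) \<kappa> by (intro dependence_extend) auto
  qed
qed

end

definition galg_span :: "'a::ab_group_add set \<Rightarrow> 'a set \<Rightarrow> ('a \<Rightarrow>\<^sub>0 'k::comm_ring_1) set" where
  "galg_span B T = {m. \<exists>s. (\<forall>t\<in>T. s t \<in> galg B) \<and> m = (\<Sum>t\<in>T. s t * single t 1)}"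

lemma galg_span_0: "0 \<in> galg_span B T"
  unfolding galg_span_def by (intro CollectI exI[of _ "\<lambda>t. 0"]) simp

lemma galg_span_add:
  assumes "m1 \<in> galg_span B T" "m2 \<in> galg_span B T"
  shows "m1 + m2 \<in> galg_span B T"
proof -
  obtain s1 s2 where s1: "\<forall>t\<in>T. s1 t \<in> galg B" "m1 = (\<Sum>t\<in>T. s1 t * single t 1)"
    and s2: "\<forall>t\<in>T. s2 t \<in> galg B" "m2 = (\<Sum>t\<in>T. s2 t * single t 1)"
    using assms unfolding galg_span_def by blast
  have "m1 + m2 = (\<Sum>t\<in>T. (s1 t + s2 t) * single t 1)"
    unfolding s1(2) s2(2) by (simp add: sum.distrib algebra_simps)
  then show ?thesis unfolding galg_span_def using s1(1) s2(1)
    by (intro CollectI exI[of _ "\<lambda>t. s1 t + s2 t"]) (auto intro: galg_add)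
qed

lemma galg_span_sum: "(\<And>i. i \<in> X \<Longrightarrow> h i \<in> galg_span B T) \<Longrightarrow> sum h X \<in> galg_span B T"
  by (induction X rule: infinite_finite_induct) (auto simp: galg_span_0 galg_span_add)

lemma galg_span_generator:
  assumes "finite T" "b \<in> galg B" "t \<in> T"
  shows "b * single t 1 \<in> galg_span B T"
proof -
  have "(\<Sum>t'\<in>T. (if t' = t then b else 0) * single t' 1) = (\<Sum>t'\<in>T. if t' = t then b * single t' 1 else 0)"
    by (intro sum.cong) auto
  also have "\<dots> = b * single t 1" using assms(1,3) by simp
  finally show ?thesis unfolding galg_span_def using assms(2)
    by (intro CollectI exI[of _ "\<lambda>t'. if t' = t then b else 0"]) auto
qed

lemma galg_span_single_mult:
  fixes m :: "'a::ab_group_add \<Rightarrow>\<^sub>0 'k::comm_ring_1"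
  assumes B: "subgrp B" and T: "finite T" and shift: "\<forall>t\<in>T. \<exists>t'\<in>T. \<exists>\<beta>\<in>B. a + t = t' + \<beta>"
    and m: "m \<in> galg_span B T"
  shows "single a c * m \<in> galg_span B T"
proof -
  obtain s where s: "\<forall>t\<in>T. s t \<in> galg B" "m = (\<Sum>t\<in>T. s t * single t 1)"
    using m unfolding galg_span_def by blast
  have "single a c * (s t * single t 1) \<in> galg_span B T" if t: "t \<in> T" for t
  proof -
    obtain t' \<beta> where t': "t' \<in> T" "\<beta> \<in> B" "a + t = t' + \<beta>" using shift t by blast
    have "single a c * (s t * single t 1) = (s t * single \<beta> c) * single t' 1"
      by (simp add: mult_ac mult_single t'(3) add.commute)
    moreover have "s t * single \<beta> c \<in> galg B"
      using s(1) t t'(2) B by (intro galg_mult galg_single) auto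
    ultimately show ?thesis using galg_span_generator[OF T _ t'(1)] by simp
  qed
  then show ?thesis unfolding s(2) sum_distrib_left by (rule galg_span_sum)
qed

text \<open>As \<open>A/B\<close> is torsion, pick \<open>n\<^sub>a \<ge> 1\<close> with \<open>n\<^sub>a a \<in> B\<close>; then \<open>T\<close> can be taken to be the
  sums \<open>\<Sum>a\<in>F. e\<^sub>a a\<close> with \<open>0 \<le> e\<^sub>a < n\<^sub>a\<close>.\<close>

lemma exists_shift_closed_set:
  assumes B: "subgrp B" "dense B" and F: "finite F"
  obtains T where "finite T" "0 \<in> T" "\<forall>a\<in>F. \<forall>t\<in>T. \<exists>t'\<in>T. \<exists>\<beta>\<in>B. a + t = t' + \<beta>"
proof -
  have "\<forall>a. \<exists>m. m \<ge> 1 \<and> nmult m a \<in> B" using B(2) unfolding dense_def isol_def by blast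
  then obtain n where n: "\<And>a. n a \<ge> 1" "\<And>a. nmult (n a) a \<in> B" by metis
  define E where "E = PiE F (\<lambda>a. {..<n a})"
  define tv where "tv e = (\<Sum>b\<in>F. nmult (e b) b)" for e
  have tv_update: "tv (e(a := k)) = nmult k a + (\<Sum>b\<in>F - {a}. nmult (e b) b)"
    "tv e = nmult (e a) a + (\<Sum>b\<in>F - {a}. nmult (e b) b)" if "a \<in> F" for e a k
    using F that by (simp_all add: tv_def sum.remove)
  have "finite (tv ` E)" unfolding E_def using F by (simp add: finite_PiE)
  moreover have "0 \<in> tv ` E"
  proof -
    have "(\<lambda>b\<in>F. 0) \<in> E" using n(1) unfolding E_def by (auto simp: Suc_le_eq)
    moreover have "tv (\<lambda>b\<in>F. 0) = 0" unfolding tv_def by simp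
    ultimately show ?thesis by force
  qed
  moreover have "\<exists>t'\<in>tv ` E. \<exists>\<beta>\<in>B. a + t = t' + \<beta>" if a: "a \<in> F" and t: "t \<in> tv ` E" for a t
  proof -
    obtain e where e: "e \<in> E" "t = tv e" using t by blast
    have "e a < n a" using e(1) a unfolding E_def by auto
    show ?thesis
    proof (cases "Suc (e a) < n a")
      case True
      have "e(a := Suc (e a)) \<in> E" using e(1) True a unfolding E_def by (auto simp: PiE_def extensional_def)
      moreover have "tv (e(a := Suc (e a))) = a + t"
        unfolding e(2) using tv_update[OF a] by (simp add: nmult_Suc add.assoc)
      ultimately show ?thesis using subgrpD(1)[OF B(1)] by force
    next
      case False
      then have na: "n a = Suc (e a)" using \<open>e a < n a\<close> by simp
      have "e(a := 0) \<in> E" using e(1) n(1)[of a] a unfolding E_def by (auto simp: PiE_def extensional_def)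
      moreover have "a + t = tv (e(a := 0)) + nmult (n a) a"
        unfolding e(2) using tv_update[OF a] na by (simp add: nmult_Suc algebra_simps)
      ultimately show ?thesis using n(2)[of a] by force
    qed
  qed
  ultimately show ?thesis using that[of "tv ` E"] by blast
qed

lemma powers_in_galg_span:
  fixes x :: "'a::ab_group_add \<Rightarrow>\<^sub>0 'k::comm_ring_1"
  assumes "subgrp B" "dense B"
  obtains T where "finite T" "\<And>i. x ^ i \<in> galg_span B T"
proof -
  obtain T where T: "finite T" "0 \<in> T" "\<forall>a\<in>keys x. \<forall>t\<in>T. \<exists>t'\<in>T. \<exists>\<beta>\<in>B. a + t = t' + \<beta>"
    using exists_shift_closed_set[OF assms finite_keys] by blast
  have "x * m \<in> galg_span B T" if "m \<in> galg_span B T" for m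
  proof -
    have "x * m = (\<Sum>a\<in>keys x. single a (lookup x a) * m)"
      by (subst pm_single_expansion[of x]) (simp add: sum_distrib_right)
    also have "\<dots> \<in> galg_span B T"
      using T(3) that by (intro galg_span_sum galg_span_single_mult[OF assms(1) T(1)]) auto
    finally show ?thesis .
  qed
  moreover have "1 \<in> galg_span B T"
    using galg_span_generator[OF T(1) galg_one[OF assms(1)] T(2)] by simp
  ultimately have "x ^ i \<in> galg_span B T" for i by (induction i) auto
  then show ?thesis using T(1) that by blast
qed

lemma relation_coeffs_mem:
  assumes P: "is_ideal P" and J: "prime_ideal J" "J \<subseteq> P" "galg B \<inter> P \<subseteq> J"
    and x: "x \<in> P" "x \<notin> J"
  shows "\<forall>i\<le>m. s i \<in> galg B \<Longrightarrow> (\<Sum>i\<le>m. s i * x ^ i) \<in> J \<Longrightarrow> \<forall>i\<le>m. s i \<in> J"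
proof (induction m arbitrary: s)
  case 0
  then show ?case by simp
next
  case (Suc m)
  have Jid: "is_ideal J" using prime_idealD(1)[OF J(1)] .
  define Y where "Y = (\<Sum>i\<le>m. s (Suc i) * x ^ i)"
  have split: "(\<Sum>i\<le>Suc m. s i * x ^ i) = s 0 + x * Y"
    unfolding Y_def sum.atMost_Suc_shift by (simp add: sum_distrib_left mult_ac)
  have "x * Y \<in> P" using is_idealD(4)[OF P x(1)] by (simp add: mult.commute)
  moreover have "s 0 + x * Y \<in> P" using Suc.prems(2) J(2) unfolding split by blast
  ultimately have "s 0 \<in> P" by (rule is_ideal_add_cancel[OF P])
  moreover have "s 0 \<in> galg B" using Suc.prems(1) by simp
  ultimately have s0: "s 0 \<in> J" using J(3) by blast
  then have "x * Y \<in> J" using Suc.prems(2) split is_ideal_diff[OF Jid, of "s 0 + x * Y" "s 0"] by simp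
  then have "Y \<in> J" using prime_idealD(2)[OF J(1)] x(2) by blast
  moreover have "\<forall>i\<le>m. s (Suc i) \<in> galg B" using Suc.prems(1) by simp
  ultimately have IH: "\<forall>i\<le>m. s (Suc i) \<in> J" using Suc.IH[of "\<lambda>i. s (Suc i)"] unfolding Y_def by blast
  show ?case
  proof (intro allI impI)
    fix i assume "i \<le> Suc m"
    then show "s i \<in> J" using s0 IH by (cases i) simp_all
  qed
qed

lemma incomparability:
  fixes J P :: "('a::ab_group_add \<Rightarrow>\<^sub>0 'k::comm_ring_1) set"
  assumes J: "prime_ideal J" and P: "is_ideal P" and JP: "J \<subseteq> P" and PB: "galg B \<inter> P \<subseteq> J"
    and B: "subgrp B" "dense B"
  shows "P \<subseteq> J"
proof
  fix x assume xP: "x \<in> P"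
  show "x \<in> J"
  proof (rule ccontr)
    assume xJ: "x \<notin> J"
    obtain T where T: "finite T" "\<And>i. x ^ i \<in> galg_span B T"
      by (rule powers_in_galg_span[OF B, where x = x]) blast
    then have "\<forall>i. \<exists>s. (\<forall>t\<in>T. s t \<in> galg B) \<and> x ^ i = (\<Sum>t\<in>T. s t * single t 1)"
      unfolding galg_span_def by blast
    then obtain c where c: "\<And>i. \<forall>t\<in>T. c i t \<in> galg B" "\<And>i. x ^ i = (\<Sum>t\<in>T. c i t * single t 1)"
      by metis
    interpret subring_mod_prime "galg B" J
    proof
      show "prime_ideal J" by (rule J)
      show "(1 :: 'a \<Rightarrow>\<^sub>0 'k) \<in> galg B" by (rule galg_one[OF B(1)])
      fix a b :: "'a \<Rightarrow>\<^sub>0 'k" assume "a \<in> galg B" "b \<in> galg B"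
      then show "a * b \<in> galg B" "a - b \<in> galg B" by (simp_all add: galg_mult[OF B(1)] galg_diff)
    qed
    have "\<forall>j\<in>{..card T}. x ^ j - (\<Sum>t\<in>T. c j t * single t 1) \<in> J"
      using c(2) is_idealD(1)[OF prime_idealD(1)[OF J]] by simp
    then obtain s where s: "\<forall>j\<in>{..card T}. s j \<in> galg B" "\<exists>j\<in>{..card T}. s j \<notin> J"
      "(\<Sum>j\<in>{..card T}. s j * x ^ j) \<in> J"
      using linear_dependence[OF T(1) finite_atMost, of "card T" c "\<lambda>i. x ^ i" "\<lambda>t. single t 1"] c(1)
      by auto
    have "\<forall>i\<le>card T. s i \<in> J"
      by (rule relation_coeffs_mem[OF P J JP PB xP xJ]) (use s(1,3) in auto)
    then show False using s(2) by auto
  qed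
qed

section \<open>The unique product property for cosets of an isolated subgroup\<close>

lemma exists_weights_sums_nonzero:
  fixes F :: "'a set" and W :: "'d set" and z :: "'d \<Rightarrow> 'a \<Rightarrow> int"
  assumes F: "finite F" and W: "finite W" and nz: "\<forall>d\<in>W. \<exists>x\<in>F. z d x \<noteq> 0"
  shows "\<exists>w :: 'a \<Rightarrow> real. \<forall>d\<in>W. (\<Sum>x\<in>F. of_int (z d x) * w x) \<noteq> 0"
proof -
  obtain idx :: "'a \<Rightarrow> nat" and m where idx: "idx ` F = {i. i < m}" "inj_on idx F"
    using finite_imp_inj_to_nat_seg[OF F] by blast
  txt \<open>Take \<open>w x = \<tau> ^ idx x\<close> with \<open>\<tau>\<close> not a root of any of the nonzero polynomials \<open>p d\<close>.\<close>
  define p where "p d = (\<Sum>x\<in>F. monom (of_int (z d x) :: real) (idx x))" for d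
  have pval: "poly (p d) t = (\<Sum>x\<in>F. of_int (z d x) * t ^ idx x)" for d t
    unfolding p_def by (simp add: poly_sum poly_monom)
  have "p d \<noteq> 0" if d: "d \<in> W" for d
  proof
    assume p0: "p d = 0"
    obtain x0 where x0: "x0 \<in> F" "z d x0 \<noteq> 0" using nz d by blast
    have "coeff (p d) (idx x0) = (\<Sum>x\<in>F. if idx x = idx x0 then (of_int (z d x) :: real) else 0)"
      unfolding p_def by (simp add: coeff_sum)
    also have "\<dots> = (\<Sum>x\<in>F. if x = x0 then (of_int (z d x) :: real) else 0)"
      using idx(2) x0(1) by (intro sum.cong refl) (auto dest: inj_onD)
    also have "\<dots> = of_int (z d x0)" using F x0(1) by simp
    finally show False using p0 x0(2) by simp
  qed
  then have "finite (\<Union>d\<in>W. {t. poly (p d) t = 0})"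
    using W poly_roots_finite by blast
  then obtain \<tau> :: real where "\<tau> \<notin> (\<Union>d\<in>W. {t. poly (p d) t = 0})"
    using ex_new_if_finite[OF infinite_UNIV_char_0] by blast
  then show ?thesis using pval by (intro exI[of _ "\<lambda>x. \<tau> ^ idx x"]) auto
qed

definition indep_mod :: "'a::ab_group_add set \<Rightarrow> 'a set \<Rightarrow> bool" where
  "indep_mod E F \<longleftrightarrow> (\<forall>c. (\<Sum>x\<in>F. zmult (c x) x) \<in> E \<longrightarrow> (\<forall>x\<in>F. c x = 0))"

lemma exists_maximal_indep_mod:
  fixes E :: "'a::ab_group_add set"
  assumes E: "subgrp E" and fr: "finite_rank (UNIV :: 'a set)"
  obtains F where "finite F" "indep_mod E F" "\<And>F'. finite F' \<Longrightarrow> indep_mod E F' \<Longrightarrow> card F' \<le> card F"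
proof -
  obtain N where N: "\<forall>F. finite F \<and> F \<subseteq> (UNIV :: 'a set) \<and> z_indep F \<longrightarrow> card F \<le> N"
    using fr unfolding finite_rank_def by (elim exE) (rule that)
  have "z_indep F" if "indep_mod E F" for F :: "'a set"
    unfolding z_indep_def
  proof (intro allI impI)
    fix c assume "(\<Sum>x\<in>F. zmult (c x) x) = 0"
    then have "(\<Sum>x\<in>F. zmult (c x) x) \<in> E" using subgrpD(1)[OF E] by simp
    then show "\<forall>x\<in>F. c x = 0" using that unfolding indep_mod_def by blast
  qed
  then have bounded: "card F \<le> N" if "finite F" "indep_mod E F" for F :: "'a set"
    using N that by blast
  define K where "K = {card F | F. finite F \<and> indep_mod E F}"
  have "0 \<in> K" unfolding K_def indep_mod_def by (intro CollectI exI[of _ "{}"]) auto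
  moreover have "finite K"
    by (rule finite_subset[of _ "{..N}"]) (auto simp: K_def intro: bounded)
  ultimately obtain F where F: "finite F" "indep_mod E F" "card F = Max K"
    using Max_in[of K] unfolding K_def by force
  show ?thesis
  proof (rule that[OF F(1,2)])
    fix F' :: "'a set" assume "finite F'" "indep_mod E F'"
    then show "card F' \<le> card F" using F(3) \<open>finite K\<close> unfolding K_def by (auto intro: Max_ge)
  qed
qed

lemma maximal_indep_mod_represents:
  fixes E :: "'a::ab_group_add set"
  assumes E: "subgrp E" and F: "finite F" "indep_mod E F"
    and max: "\<And>F'. finite F' \<Longrightarrow> indep_mod E F' \<Longrightarrow> card F' \<le> card F"
  shows "\<exists>n z. n > 0 \<and> zmult n a - (\<Sum>x\<in>F. zmult (z x) x) \<in> E"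
proof (cases "a \<in> F")
  case True
  have "(\<Sum>x\<in>F. zmult (if x = a then 1 else 0) x) = (\<Sum>x\<in>F. if x = a then x else 0)"
    by (intro sum.cong) auto
  also have "\<dots> = a" using True F(1) by simp
  finally show ?thesis using subgrpD(1)[OF E] by (intro exI[of _ 1] exI[of _ "\<lambda>x. if x = a then 1 else 0"]) simp
next
  case False
  then have "\<not> indep_mod E (insert a F)" using max[of "insert a F"] F(1) by auto
  then obtain c where c: "(\<Sum>x\<in>insert a F. zmult (c x) x) \<in> E" "\<exists>x\<in>insert a F. c x \<noteq> 0"
    unfolding indep_mod_def by blast
  have cs: "(\<Sum>x\<in>insert a F. zmult (c x) x) = zmult (c a) a + (\<Sum>x\<in>F. zmult (c x) x)"
    using False F(1) by simp
  have "c a \<noteq> 0"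
  proof
    assume "c a = 0"
    then have "\<forall>x\<in>F. c x = 0" using c(1) cs F(2) unfolding indep_mod_def by simp
    then show False using c(2) \<open>c a = 0\<close> by auto
  qed
  define \<sigma> where "\<sigma> = sgn (c a)"
  have "zmult (\<sigma> * c a) a - (\<Sum>x\<in>F. zmult (- \<sigma> * c x) x) = zmult \<sigma> (\<Sum>x\<in>insert a F. zmult (c x) x)"
    unfolding cs by (simp add: zmult_mult zmult_plus zmult_sum zmult_uminus_left sum_negf)
  also have "\<dots> \<in> E" using subgrp_zmult[OF E c(1)] .
  finally have "zmult (\<sigma> * c a) a - (\<Sum>x\<in>F. zmult (- \<sigma> * c x) x) \<in> E" .
  moreover have "\<sigma> * c a > 0" using \<open>c a \<noteq> 0\<close> unfolding \<sigma>_def by (cases "c a > 0") auto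
  ultimately show ?thesis by (intro exI[of _ "\<sigma> * c a"] exI[of _ "\<lambda>x. - \<sigma> * c x"]) simp
qed

lemma indep_mod_representation_unique:
  fixes E :: "'a::ab_group_add set"
  assumes E: "subgrp E" and F: "indep_mod E F"
    and r: "zmult n a - (\<Sum>x\<in>F. zmult (z x) x) \<in> E" and r': "zmult n' a - (\<Sum>x\<in>F. zmult (z' x) x) \<in> E"
  shows "\<forall>x\<in>F. n' * z x = n * z' x"
proof -
  have "zmult n' (zmult n a - (\<Sum>x\<in>F. zmult (z x) x)) - zmult n (zmult n' a - (\<Sum>x\<in>F. zmult (z' x) x)) \<in> E"
    by (rule subgrp_diff[OF E subgrp_zmult[OF E r] subgrp_zmult[OF E r']])
  also have "zmult n' (zmult n a - (\<Sum>x\<in>F. zmult (z x) x)) - zmult n (zmult n' a - (\<Sum>x\<in>F. zmult (z' x) x))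
      = (\<Sum>x\<in>F. zmult (n * z' x - n' * z x) x)"
    by (simp add: zmult_diff zmult_sum zmult_mult[symmetric] mult.commute zmult_diff_left sum_subtractf)
  finally show ?thesis using F unfolding indep_mod_def by force
qed

text \<open>By independence of \<open>F\<close> modulo \<open>E\<close>, the quotient below does not depend on the chosen
  representation \<open>n a \<equiv> \<Sum>x\<in>F. z x x (mod E)\<close>; additivity follows.\<close>

lemma additive_functional_of_representation:
  fixes E :: "'a::ab_group_add set" and w :: "'a \<Rightarrow> real"
  assumes E: "subgrp E" and F: "indep_mod E F"
    and nn: "\<And>a. nn a > (0::int)" and zz: "\<And>a. zmult (nn a) a - (\<Sum>x\<in>F. zmult (zz a x) x) \<in> E"
  defines "\<psi> \<equiv> \<lambda>a. (\<Sum>x\<in>F. of_int (zz a x) * w x) / of_int (nn a)"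
  shows "\<psi> (a + b) = \<psi> a + \<psi> b" and "e \<in> E \<Longrightarrow> \<psi> e = 0"
proof -
  have \<psi>_rep: "\<psi> a = (\<Sum>x\<in>F. of_int (z x) * w x) / of_int n"
    if n: "n > 0" and r: "zmult n a - (\<Sum>x\<in>F. zmult (z x) x) \<in> E" for n z a
  proof -
    have u: "\<forall>x\<in>F. nn a * z x = n * zz a x"
      by (rule indep_mod_representation_unique[OF E F r zz[of a]])
    have "of_int n * (\<Sum>x\<in>F. of_int (zz a x) * w x) = (\<Sum>x\<in>F. of_int (n * zz a x) * w x)"
      by (simp add: sum_distrib_left mult.assoc)
    also have "\<dots> = (\<Sum>x\<in>F. of_int (nn a * z x) * w x)" using u by (intro sum.cong) auto
    also have "\<dots> = of_int (nn a) * (\<Sum>x\<in>F. of_int (z x) * w x)"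
      by (simp add: sum_distrib_left mult.assoc)
    finally show ?thesis unfolding \<psi>_def using n nn[of a] by (simp add: field_simps)
  qed
  have "zmult (nn b) (zmult (nn a) a - (\<Sum>x\<in>F. zmult (zz a x) x))
      + zmult (nn a) (zmult (nn b) b - (\<Sum>x\<in>F. zmult (zz b x) x)) \<in> E"
    by (rule subgrp_add[OF E subgrp_zmult[OF E zz] subgrp_zmult[OF E zz]])
  also have "zmult (nn b) (zmult (nn a) a - (\<Sum>x\<in>F. zmult (zz a x) x))
      + zmult (nn a) (zmult (nn b) b - (\<Sum>x\<in>F. zmult (zz b x) x))
     = zmult (nn a * nn b) (a + b) - (\<Sum>x\<in>F. zmult (nn b * zz a x + nn a * zz b x) x)"
    by (simp add: zmult_diff zmult_plus zmult_sum zmult_mult[symmetric] zmult_add sum.distrib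
        mult.commute)
  finally have "\<psi> (a + b) = (\<Sum>x\<in>F. of_int (nn b * zz a x + nn a * zz b x) * w x) / of_int (nn a * nn b)"
    using nn[of a] nn[of b] by (intro \<psi>_rep) auto
  also have "\<dots> = (of_int (nn b) * (\<Sum>x\<in>F. of_int (zz a x) * w x)
      + of_int (nn a) * (\<Sum>x\<in>F. of_int (zz b x) * w x)) / (of_int (nn a) * of_int (nn b))"
    by (simp add: sum_distrib_left sum.distrib algebra_simps)
  also have "\<dots> = \<psi> a + \<psi> b" unfolding \<psi>_def using nn[of a] nn[of b] by (simp add: field_simps)
  finally show "\<psi> (a + b) = \<psi> a + \<psi> b" .
  show "e \<in> E \<Longrightarrow> \<psi> e = 0" using \<psi>_rep[of 1 e "\<lambda>x. 0"] by simp
qed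

text \<open>As \<open>A/E\<close> is torsion-free of finite rank it embeds in \<open>\<rat>\<^sup>n\<close>; a generic real functional on
  \<open>\<rat>\<^sup>n\<close> is nonzero at finitely many given nonzero points.\<close>

lemma exists_separating_functional:
  fixes E :: "'a::ab_group_add set"
  assumes E: "subgrp E" "isol E = E" and fr: "finite_rank (UNIV :: 'a set)"
    and W: "finite W" "W \<inter> E = {}"
  shows "\<exists>\<psi> :: 'a \<Rightarrow> real. (\<forall>x y. \<psi> (x + y) = \<psi> x + \<psi> y) \<and> (\<forall>e\<in>E. \<psi> e = 0) \<and> (\<forall>d\<in>W. \<psi> d \<noteq> 0)"
proof -
  obtain F where F: "finite F" "indep_mod E F" "\<And>F'. finite F' \<Longrightarrow> indep_mod E F' \<Longrightarrow> card F' \<le> card F"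
    using exists_maximal_indep_mod[OF E(1) fr] by blast
  have "\<forall>a. \<exists>n z. n > 0 \<and> zmult n a - (\<Sum>x\<in>F. zmult (z x) x) \<in> E"
    using maximal_indep_mod_represents[OF E(1) F] by blast
  then obtain nn zz where nn: "\<And>a. nn a > (0::int)"
    and zz: "\<And>a. zmult (nn a) a - (\<Sum>x\<in>F. zmult (zz a x) x) \<in> E"
    by metis
  have "\<exists>x\<in>F. zz d x \<noteq> 0" if d: "d \<in> W" for d
  proof (rule ccontr)
    assume "\<not> (\<exists>x\<in>F. zz d x \<noteq> 0)"
    then have "nmult (nat (nn d)) d \<in> E" using zz[of d] nn[of d] by (simp add: zmult_def)
    then have "d \<in> isol E" unfolding isol_def using nn[of d] by (auto intro: exI[of _ "nat (nn d)"])
    then show False using E(2) W(2) d by auto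
  qed
  then obtain w :: "'a \<Rightarrow> real" where w: "\<forall>d\<in>W. (\<Sum>x\<in>F. of_int (zz d x) * w x) \<noteq> 0"
    using exists_weights_sums_nonzero[OF F(1) W(1)] by blast
  define \<psi> where "\<psi> a = (\<Sum>x\<in>F. of_int (zz a x) * w x) / of_int (nn a)" for a
  have "\<forall>x y. \<psi> (x + y) = \<psi> x + \<psi> y" "\<forall>e\<in>E. \<psi> e = 0"
    using additive_functional_of_representation[OF E(1) F(2) nn zz, where w = w] unfolding \<psi>_def by auto
  moreover have "\<forall>d\<in>W. \<psi> d \<noteq> 0" using w nn[THEN less_imp_neq] unfolding \<psi>_def by auto
  ultimately show ?thesis by blast
qed

text \<open>Take \<open>u\<^sub>0\<close> and \<open>v\<^sub>0\<close> maximising a functional that separates the differences within \<open>U\<close>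
  and within \<open>V\<close> from \<open>E\<close>.\<close>

lemma unique_product_cosets:
  fixes E :: "'a::ab_group_add set"
  assumes E: "subgrp E" "isol E = E" and fr: "finite_rank (UNIV :: 'a set)"
    and U: "finite U" "U \<noteq> {}" "\<forall>u\<in>U. \<forall>u'\<in>U. u - u' \<in> E \<longrightarrow> u = u'"
    and V: "finite V" "V \<noteq> {}" "\<forall>v\<in>V. \<forall>v'\<in>V. v - v' \<in> E \<longrightarrow> v = v'"
  shows "\<exists>u0\<in>U. \<exists>v0\<in>V. \<forall>u\<in>U. \<forall>v\<in>V. u + v - (u0 + v0) \<in> E \<longrightarrow> u = u0 \<and> v = v0"
proof -
  define W where "W = (\<lambda>(u, u'). u - u') ` {p \<in> U \<times> U. fst p \<noteq> snd p}
    \<union> (\<lambda>(v, v'). v - v') ` {p \<in> V \<times> V. fst p \<noteq> snd p}"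
  have W: "finite W" "W \<inter> E = {}" unfolding W_def using U(1,3) V(1,3) by auto
  obtain \<psi> :: "'a \<Rightarrow> real"
    where \<psi>: "\<forall>x y. \<psi> (x + y) = \<psi> x + \<psi> y" "\<forall>e\<in>E. \<psi> e = 0" "\<forall>d\<in>W. \<psi> d \<noteq> 0"
    using exists_separating_functional[OF E fr W] by blast
  have \<psi>_diff: "\<psi> (x - y) = \<psi> x - \<psi> y" for x y
    using \<psi>(1) by (metis add_diff_cancel_left' diff_add_cancel eq_diff_eq)
  have "Max (\<psi> ` U) \<in> \<psi> ` U" "Max (\<psi> ` V) \<in> \<psi> ` V" using U(1,2) V(1,2) by simp_all
  then obtain u0 v0 where "u0 \<in> U" "\<psi> u0 = Max (\<psi> ` U)" "v0 \<in> V" "\<psi> v0 = Max (\<psi> ` V)" by auto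
  then have u0: "u0 \<in> U" "\<forall>u\<in>U. \<psi> u \<le> \<psi> u0" and v0: "v0 \<in> V" "\<forall>v\<in>V. \<psi> v \<le> \<psi> v0"
    using U(1) V(1) by auto
  have "u = u0 \<and> v = v0" if u: "u \<in> U" and v: "v \<in> V" and e: "u + v - (u0 + v0) \<in> E" for u v
  proof -
    have "\<psi> (u + v - (u0 + v0)) = 0" using \<psi>(2) e by blast
    then have "\<psi> u + \<psi> v = \<psi> u0 + \<psi> v0" using \<psi>_diff \<psi>(1) by simp
    moreover have "\<psi> u \<le> \<psi> u0" "\<psi> v \<le> \<psi> v0" using u0(2) v0(2) u v by auto
    ultimately have "\<psi> (u - u0) = 0" "\<psi> (v - v0) = 0" using \<psi>_diff by simp_all
    then have "u - u0 \<notin> W" "v - v0 \<notin> W" using \<psi>(3) by auto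
    moreover have "u - u0 \<in> W" if "u \<noteq> u0" unfolding W_def using u u0(1) that by force
    moreover have "v - v0 \<in> W" if "v \<noteq> v0" unfolding W_def using v v0(1) that by force
    ultimately show ?thesis by blast
  qed
  then show ?thesis using u0(1) v0(1) by blast
qed

section \<open>Extended ideals from isolated subgroups\<close>

definition ext_ideal :: "'a::ab_group_add set \<Rightarrow> ('a \<Rightarrow>\<^sub>0 'k::comm_ring_1) set \<Rightarrow> ('a \<Rightarrow>\<^sub>0 'k) set" where
  "ext_ideal E P = ideal_gen_in UNIV (P \<inter> galg E)"

text \<open>The component of \<open>f\<close> on the coset \<open>E - a\<close>, translated into \<open>kE\<close>.\<close>

definition coset_part :: "'a::ab_group_add set \<Rightarrow> 'a \<Rightarrow> ('a \<Rightarrow>\<^sub>0 'k::comm_ring_1) \<Rightarrow> ('a \<Rightarrow>\<^sub>0 'k)" where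
  "coset_part E a f = proj E (single a 1 * f)"

lemma keys_coset_part: "keys (coset_part E a f) \<subseteq> E"
  by (simp add: coset_part_def keys_proj)

lemma ext_ideal_subset: "is_ideal P \<Longrightarrow> ext_ideal E P \<subseteq> P"
  unfolding ext_ideal_def is_ideal_def by (rule ideal_gen_in_subset) auto

lemma mem_ext_ideal_iff:
  fixes P :: "('a::ab_group_add \<Rightarrow>\<^sub>0 'k::comm_ring_1) set"
  assumes P: "is_ideal P" and E: "subgrp E"
  shows "f \<in> ext_ideal E P \<longleftrightarrow> (\<forall>a. coset_part E a f \<in> P)"
proof
  let ?J = "ext_ideal E P"
  have Jid: "is_ideal ?J" unfolding ext_ideal_def by (rule is_ideal_ideal_gen_in_UNIV)
  have "?J \<inter> galg E = P \<inter> galg E"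
    using ext_ideal_subset[OF P] ideal_gen_in_base[of "UNIV :: ('a \<Rightarrow>\<^sub>0 'k) set"]
    unfolding ext_ideal_def by blast
  then have "controls UNIV ?J E" unfolding controls_def by (simp add: ext_ideal_def)
  moreover have "is_ideal_in (galg UNIV) ?J" using Jid by (simp add: is_ideal_def)
  ultimately have projJ: "\<forall>g\<in>?J. proj E g \<in> ?J"
    using controls_iff_proj[OF subgrp_UNIV _ E subset_UNIV] by blast
  assume "f \<in> ?J"
  then show "\<forall>a. coset_part E a f \<in> P"
    using projJ is_idealD(3)[OF Jid] ext_ideal_subset[OF P] unfolding coset_part_def by blast
next
  assume h: "\<forall>a. coset_part E a f \<in> P"
  obtain T where T: "finite T" "T \<subseteq> keys f" "\<forall>t\<in>T. \<forall>t'\<in>T. t - t' \<in> E \<longrightarrow> t = t'"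
    "\<forall>a\<in>keys f. \<exists>t\<in>T. a - t \<in> E" "f = (\<Sum>t\<in>T. single t 1 * proj E (single (- t) 1 * f))"
    by (rule exists_coset_decomposition[OF E])
  have "f = (\<Sum>t\<in>T. coset_part E (- t) f * single t 1)"
    using T(5) by (simp add: coset_part_def mult.commute)
  also have "\<dots> \<in> ext_ideal E P" unfolding ext_ideal_def
    by (intro ideal_gen_in_sum[OF T(1)]) (simp_all add: h galg_iff keys_coset_part)
  finally show "f \<in> ext_ideal E P" .
qed

lemma coset_part_add_mem_iff:
  fixes P :: "('a::ab_group_add \<Rightarrow>\<^sub>0 'k::comm_ring_1) set"
  assumes P: "is_ideal P" and E: "subgrp E" "e \<in> E"
  shows "coset_part E (a + e) f \<in> P \<longleftrightarrow> coset_part E a f \<in> P"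
proof -
  have "single (a + e) 1 * f = single e 1 * (single a 1 * f)"
    by (simp add: mult.assoc[symmetric] mult_single add.commute)
  then have eq: "coset_part E (a + e) f = single e 1 * coset_part E a f"
    using proj_single_mult[OF E] by (simp add: coset_part_def)
  then have "coset_part E a f = single (- e) 1 * coset_part E (a + e) f"
    by (simp add: mult.assoc[symmetric] mult_single)
  then show ?thesis using eq is_idealD(3)[OF P] by metis
qed

lemma coset_part_nonzero:
  assumes "coset_part E a f \<noteq> 0"
  shows "\<exists>k\<in>keys f. a + k \<in> E"
proof -
  obtain x where "lookup (coset_part E a f) x \<noteq> 0"
    using assms poly_mapping_eqI[of "coset_part E a f" 0] by auto
  then have "x \<in> E" "lookup f (x - a) \<noteq> 0"
    by (auto simp: coset_part_def lookup_proj lookup_single_mult split: if_splits)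
  then show ?thesis by (intro bexI[of _ "x - a"]) (auto simp: in_keys_iff)
qed

lemma coset_part_notin_on_transversal:
  fixes P :: "('a::ab_group_add \<Rightarrow>\<^sub>0 'k::comm_ring_1) set"
  assumes P: "is_ideal P" and E: "subgrp E"
    and f: "f \<notin> ext_ideal E P" and T: "\<forall>a\<in>keys f. \<exists>t\<in>T. a - t \<in> E"
  shows "\<exists>t\<in>T. coset_part E (- t) f \<notin> P"
proof -
  obtain a where a: "coset_part E a f \<notin> P" using f mem_ext_ideal_iff[OF P E] by blast
  then have "coset_part E a f \<noteq> 0" using is_idealD(1)[OF P] by auto
  then obtain k where k: "k \<in> keys f" "a + k \<in> E" using coset_part_nonzero by blast
  obtain t where t: "t \<in> T" "k - t \<in> E" using T k(1) by blast
  have "(k - t) - (a + k) \<in> E" using subgrp_diff[OF E t(2) k(2)] .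
  moreover have "- t = a + ((k - t) - (a + k))" by simp
  ultimately have "coset_part E (- t) f \<in> P \<longleftrightarrow> coset_part E a f \<in> P"
    using coset_part_add_mem_iff[OF P E] by metis
  then show ?thesis using a t(1) by blast
qed

lemma coset_part_mult:
  fixes x y :: "'a::ab_group_add \<Rightarrow>\<^sub>0 'k::comm_ring_1"
  assumes E: "subgrp E" and x: "x = (\<Sum>t\<in>Tx. single t 1 * gx t)" and y: "y = (\<Sum>s\<in>Ty. single s 1 * gy s)"
    and keys: "\<And>t. keys (gx t) \<subseteq> E" "\<And>s. keys (gy s) \<subseteq> E"
  shows "coset_part E c (x * y) = (\<Sum>p\<in>Tx \<times> Ty.
    if c + fst p + snd p \<in> E then single (c + fst p + snd p) 1 * (gx (fst p) * gy (snd p)) else 0)"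
proof -
  have "x * y = (\<Sum>t\<in>Tx. \<Sum>s\<in>Ty. (single t 1 * gx t) * (single s 1 * gy s))"
    unfolding x y by (rule sum_product)
  then have "single c 1 * (x * y) = (\<Sum>t\<in>Tx. \<Sum>s\<in>Ty. single c 1 * ((single t 1 * gx t) * (single s 1 * gy s)))"
    by (simp only: sum_distrib_left)
  also have "\<dots> = (\<Sum>p\<in>Tx \<times> Ty. single (c + fst p + snd p) 1 * (gx (fst p) * gy (snd p)))"
    by (simp add: sum.cartesian_product case_prod_beta mult_ac mult_single add.assoc)
  finally have "coset_part E c (x * y) = (\<Sum>p\<in>Tx \<times> Ty. proj E (single (c + fst p + snd p) 1 * (gx (fst p) * gy (snd p))))"
    by (simp add: coset_part_def proj_sum)
  also have "\<dots> = (\<Sum>p\<in>Tx \<times> Ty.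
      if c + fst p + snd p \<in> E then single (c + fst p + snd p) 1 * (gx (fst p) * gy (snd p)) else 0)"
    using galg_mult[OF E, of "gx _" "gy _"] keys
    by (intro sum.cong refl proj_single_mult_in_subgrp[OF E]) (auto simp: galg_iff)
  finally show ?thesis .
qed

lemma coset_part_mult_leading:
  fixes x y :: "'a::ab_group_add \<Rightarrow>\<^sub>0 'k::comm_ring_1"
  assumes P: "is_ideal P" and E: "subgrp E"
    and x: "finite Tx" "x = (\<Sum>t\<in>Tx. single t 1 * coset_part E (- t) x)"
    and y: "finite Ty" "y = (\<Sum>s\<in>Ty. single s 1 * coset_part E (- s) y)"
    and ts0: "t0 \<in> Tx" "s0 \<in> Ty"
    and unique: "\<forall>t\<in>Tx. \<forall>s\<in>Ty. coset_part E (- t) x \<notin> P \<longrightarrow> coset_part E (- s) y \<notin> P \<longrightarrow>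
       t + s - (t0 + s0) \<in> E \<longrightarrow> t = t0 \<and> s = s0"
  shows "coset_part E (- (t0 + s0)) (x * y) - coset_part E (- t0) x * coset_part E (- s0) y \<in> P"
proof -
  define trm where "trm p = (if - (t0 + s0) + fst p + snd p \<in> E
    then single (- (t0 + s0) + fst p + snd p) 1 * (coset_part E (- fst p) x * coset_part E (- snd p) y)
    else 0)" for p
  have "coset_part E (- (t0 + s0)) (x * y) = (\<Sum>p\<in>Tx \<times> Ty. trm p)"
    unfolding trm_def by (rule coset_part_mult[OF E x(2) y(2) keys_coset_part keys_coset_part])
  also have "\<dots> = trm (t0, s0) + (\<Sum>p\<in>Tx \<times> Ty - {(t0, s0)}. trm p)"
    using x(1) y(1) ts0 by (simp add: sum.remove)
  also have "trm (t0, s0) = coset_part E (- t0) x * coset_part E (- s0) y"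
    using subgrpD(1)[OF E] by (simp add: trm_def)
  finally have eq: "coset_part E (- (t0 + s0)) (x * y) - coset_part E (- t0) x * coset_part E (- s0) y
      = (\<Sum>p\<in>Tx \<times> Ty - {(t0, s0)}. trm p)" by simp
  have "trm p \<in> P" if p: "p \<in> Tx \<times> Ty - {(t0, s0)}" for p
  proof (cases "- (t0 + s0) + fst p + snd p \<in> E")
    case True
    have "coset_part E (- fst p) x \<in> P \<or> coset_part E (- snd p) y \<in> P"
    proof (rule ccontr)
      assume "\<not> ?thesis"
      moreover have "fst p + snd p - (t0 + s0) \<in> E" using True by (simp add: algebra_simps)
      ultimately have "p = (t0, s0)" using unique p by (cases p) auto
      then show False using p by simp
    qed
    then have "coset_part E (- fst p) x * coset_part E (- snd p) y \<in> P"
      using is_idealD(3,4)[OF P] by blast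
    then show ?thesis using True is_idealD(3)[OF P] by (simp add: trm_def)
  qed (simp add: trm_def is_idealD(1)[OF P])
  then show ?thesis unfolding eq by (rule is_ideal_sum[OF P])
qed

lemma prime_ext_ideal:
  fixes P :: "('a::ab_group_add \<Rightarrow>\<^sub>0 'k::comm_ring_1) set"
  assumes P: "prime_ideal P" and E: "subgrp E" "isol E = E" and fr: "finite_rank (UNIV :: 'a set)"
  shows "prime_ideal (ext_ideal E P)"
proof -
  let ?J = "ext_ideal E P"
  have Pid: "is_ideal P" using prime_idealD(1)[OF P] .
  have "x \<in> ?J \<or> y \<in> ?J" if xy: "x * y \<in> ?J" for x y
  proof (rule ccontr)
    assume "\<not> (x \<in> ?J \<or> y \<in> ?J)"
    then have nx: "x \<notin> ?J" and ny: "y \<notin> ?J" by auto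
    obtain Tx where Tx: "finite Tx" "Tx \<subseteq> keys x" "\<forall>t\<in>Tx. \<forall>t'\<in>Tx. t - t' \<in> E \<longrightarrow> t = t'"
      "\<forall>a\<in>keys x. \<exists>t\<in>Tx. a - t \<in> E" "x = (\<Sum>t\<in>Tx. single t 1 * proj E (single (- t) 1 * x))"
      by (rule exists_coset_decomposition[OF E(1)])
    obtain Ty where Ty: "finite Ty" "Ty \<subseteq> keys y" "\<forall>t\<in>Ty. \<forall>t'\<in>Ty. t - t' \<in> E \<longrightarrow> t = t'"
      "\<forall>a\<in>keys y. \<exists>t\<in>Ty. a - t \<in> E" "y = (\<Sum>t\<in>Ty. single t 1 * proj E (single (- t) 1 * y))"
      by (rule exists_coset_decomposition[OF E(1)])
    define U where "U = {t \<in> Tx. coset_part E (- t) x \<notin> P}"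
    define V where "V = {t \<in> Ty. coset_part E (- t) y \<notin> P}"
    have U: "finite U" "U \<noteq> {}" "\<forall>u\<in>U. \<forall>u'\<in>U. u - u' \<in> E \<longrightarrow> u = u'"
      using Tx(1,3) coset_part_notin_on_transversal[OF Pid E(1) nx Tx(4)] unfolding U_def by auto
    have V: "finite V" "V \<noteq> {}" "\<forall>v\<in>V. \<forall>v'\<in>V. v - v' \<in> E \<longrightarrow> v = v'"
      using Ty(1,3) coset_part_notin_on_transversal[OF Pid E(1) ny Ty(4)] unfolding V_def by auto
    obtain t0 s0 where ts0: "t0 \<in> U" "s0 \<in> V" "\<forall>u\<in>U. \<forall>v\<in>V. u + v - (t0 + s0) \<in> E \<longrightarrow> u = t0 \<and> v = s0"
      using unique_product_cosets[OF E fr U V] by blast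
    then have t0: "t0 \<in> Tx" "coset_part E (- t0) x \<notin> P" and s0: "s0 \<in> Ty" "coset_part E (- s0) y \<notin> P"
      unfolding U_def V_def by auto
    have "\<forall>t\<in>Tx. \<forall>s\<in>Ty. coset_part E (- t) x \<notin> P \<longrightarrow> coset_part E (- s) y \<notin> P \<longrightarrow>
        t + s - (t0 + s0) \<in> E \<longrightarrow> t = t0 \<and> s = s0"
      using ts0(3) unfolding U_def V_def by blast
    moreover have "x = (\<Sum>t\<in>Tx. single t 1 * coset_part E (- t) x)"
      and "y = (\<Sum>s\<in>Ty. single s 1 * coset_part E (- s) y)"
      using Tx(5) Ty(5) by (simp_all add: coset_part_def)
    ultimately have "coset_part E (- (t0 + s0)) (x * y) - coset_part E (- t0) x * coset_part E (- s0) y \<in> P"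
      using coset_part_mult_leading[OF Pid E(1) Tx(1) _ Ty(1) _ t0(1) s0(1)] by blast
    moreover have "coset_part E (- (t0 + s0)) (x * y) \<in> P"
      using xy mem_ext_ideal_iff[OF Pid E(1)] by blast
    ultimately have "coset_part E (- t0) x * coset_part E (- s0) y \<in> P"
      using is_ideal_diff[OF Pid] by fastforce
    then show False using prime_ideal_mult_notin[OF P t0(2) s0(2)] by blast
  qed
  moreover have "is_ideal ?J" unfolding ext_ideal_def by (rule is_ideal_ideal_gen_in_UNIV)
  moreover have "?J \<noteq> UNIV" using ext_ideal_subset[OF Pid] prime_idealD(3)[OF P] by blast
  ultimately show ?thesis unfolding prime_ideal_def by blast
qed

section \<open>The controllers of \<open>P\<close> and of \<open>P \<inter> kB\<close>\<close>

lemma controller_galg_Int_subset: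
  fixes P :: "('a::ab_group_add \<Rightarrow>\<^sub>0 'k::comm_ring_1) set"
  assumes P: "is_ideal P" and B: "subgrp B"
  shows "controller B (galg B \<inter> P) \<subseteq> controller UNIV P"
proof -
  let ?C = "controller UNIV P"
  have PI: "is_ideal_in (galg UNIV) P" using P by (simp add: is_ideal_def)
  have QI: "is_ideal_in (galg B) (galg B \<inter> P)" using P B by (rule is_ideal_in_galg_Int)
  have "\<forall>f\<in>P. proj ?C f \<in> P"
    using controls_iff_proj[OF subgrp_UNIV PI controller_subgrp subset_UNIV]
      controller_controls[OF subgrp_UNIV PI] by blast
  then have "proj (?C \<inter> B) f \<in> galg B \<inter> P" if f: "f \<in> galg B \<inter> P" for f
  proof -
    have "keys f \<subseteq> B" using f by (simp add: galg_iff)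
    then have "proj (?C \<inter> B) f = proj ?C f" by (intro proj_cong) blast
    moreover have "proj ?C f \<in> galg B" using \<open>keys f \<subseteq> B\<close> by (intro galg_proj) blast
    ultimately show ?thesis using \<open>\<forall>f\<in>P. proj ?C f \<in> P\<close> f by simp
  qed
  moreover have CB: "subgrp (?C \<inter> B)" using controller_subgrp B by (rule subgrp_Int)
  ultimately have "controls B (galg B \<inter> P) (?C \<inter> B)"
    using controls_iff_proj[OF B QI CB] by blast
  then show ?thesis using controller_least[OF CB] by blast
qed

lemma controller_subset_isol:
  fixes P :: "('a::ab_group_add \<Rightarrow>\<^sub>0 'k::comm_ring_1) set"
  assumes fr: "finite_rank (UNIV :: 'a set)" and P: "prime_ideal P" and B: "subgrp B" "dense B"
  shows "controller UNIV P \<subseteq> isol (controller B (galg B \<inter> P))"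
proof -
  define D where "D = controller B (galg B \<inter> P)"
  define E where "E = isol D"
  have Pid: "is_ideal P" using prime_idealD(1)[OF P] .
  have QI: "is_ideal_in (galg B) (galg B \<inter> P)" using Pid B(1) by (rule is_ideal_in_galg_Int)
  have E: "subgrp E" "isol E = E" unfolding E_def D_def by (simp_all add: isol_subgrp controller_subgrp)
  have "D \<subseteq> E \<inter> B" using controller_subset[OF B(1) QI] subset_isol[of D] unfolding D_def E_def by blast
  then have "controls B (galg B \<inter> P) (E \<inter> B)"
    by (rule controls_mono[OF QI controller_controls[OF B(1) QI, folded D_def]])
  then have "galg B \<inter> P = ideal_gen_in (galg B) (galg B \<inter> P \<inter> galg (E \<inter> B))"
    unfolding controls_def .
  also have "\<dots> \<subseteq> ext_ideal E P" unfolding ext_ideal_def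
    by (rule ideal_gen_in_mono) (auto simp: galg_iff)
  finally have "P \<subseteq> ext_ideal E P"
    by (rule incomparability[OF prime_ext_ideal[OF P E fr] Pid ext_ideal_subset[OF Pid] _ B])
  then have "P = ext_ideal E P" using ext_ideal_subset[OF Pid] by blast
  then have "controls UNIV P E" unfolding controls_def galg_UNIV ext_ideal_def[symmetric] .
  then show ?thesis using controller_least[OF E(1) subset_UNIV] unfolding E_def D_def by blast
qed

lemma isol_controller_galg_Int:
  fixes P :: "('a::ab_group_add \<Rightarrow>\<^sub>0 'k::comm_ring_1) set"
  assumes fr: "finite_rank (UNIV :: 'a set)" and P: "prime_ideal P" and B: "subgrp B" "dense B"
  shows "isol (controller UNIV P) = isol (controller B (galg B \<inter> P))"
  using isol_mono[OF controller_subset_isol[OF fr P B]]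
    isol_mono[OF controller_galg_Int_subset[OF prime_idealD(1)[OF P] B(1)]]
  by simp

section \<open>Ranks\<close>

lemma indep_cards_nonempty: "{card F | F. finite F \<and> F \<subseteq> X \<and> z_indep F} \<noteq> {}"
  by (intro ex_in_conv[THEN iffD1] exI[of _ 0] CollectI exI[of _ "{}"]) (simp add: z_indep_def)

lemma indep_cards_bdd_above:
  assumes "finite_rank (UNIV :: 'a::ab_group_add set)"
  shows "bdd_above {card F | F. finite F \<and> F \<subseteq> (X :: 'a set) \<and> z_indep F}"
  using assms unfolding finite_rank_def bdd_above_def by blast

lemma tf_rank_mono:
  assumes "finite_rank (UNIV :: 'a::ab_group_add set)" "X \<subseteq> (Y :: 'a set)"
  shows "tf_rank X \<le> tf_rank Y"
  unfolding tf_rank_def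
  by (rule cSup_subset_mono[OF indep_cards_nonempty indep_cards_bdd_above[OF assms(1)]])
    (use assms(2) in auto)

text \<open>Replacing the elements of an independent subset of \<open>is(X)\<close> by suitable positive multiples
  gives an independent subset of \<open>X\<close> of the same size.\<close>

lemma tf_rank_isol_le:
  assumes fr: "finite_rank (UNIV :: 'a::ab_group_add set)"
  shows "tf_rank (isol X) \<le> tf_rank (X :: 'a set)"
  unfolding tf_rank_def
proof (rule cSup_mono[OF indep_cards_nonempty indep_cards_bdd_above[OF fr]])
  fix b assume "b \<in> {card F | F. finite F \<and> F \<subseteq> isol X \<and> z_indep F}"
  then obtain F where F: "b = card F" "finite F" "F \<subseteq> isol X" "z_indep F" by blast
  have "\<forall>x\<in>F. \<exists>m. m \<ge> 1 \<and> nmult m x \<in> X" using F(3) unfolding isol_def by blast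
  then obtain m where m: "\<And>x. x \<in> F \<Longrightarrow> m x \<ge> 1 \<and> nmult (m x) x \<in> X" by metis
  define g where "g x = nmult (m x) x" for x
  have sum_g: "(\<Sum>x\<in>F. zmult (c (g x)) (g x)) = (\<Sum>x\<in>F. zmult (c (g x) * int (m x)) x)" for c
    unfolding g_def by (simp add: zmult_nmult)
  have inj: "inj_on g F"
  proof (rule inj_onI, rule ccontr)
    fix x y assume x: "x \<in> F" and y: "y \<in> F" and gxy: "g x = g y" and xy: "x \<noteq> y"
    define c where "c z = (if z = x then int (m x) else if z = y then - int (m y) else 0)" for z
    have "(\<Sum>z\<in>F. zmult (c z) z) = (\<Sum>z\<in>F. (if z = x then g x else 0) + (if z = y then - g y else 0))"
      unfolding c_def g_def using xy by (intro sum.cong refl) (auto simp: zmult_uminus_left)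
    also have "\<dots> = 0" using x y F(2) gxy by (simp add: sum.distrib)
    finally have "c x = 0" using F(4) x unfolding z_indep_def by blast
    then show False using m[OF x] unfolding c_def by simp
  qed
  have "z_indep (g ` F)" unfolding z_indep_def
  proof (intro allI impI)
    fix c assume "(\<Sum>w\<in>g ` F. zmult (c w) w) = 0"
    then have "(\<Sum>x\<in>F. zmult (c (g x) * int (m x)) x) = 0" by (simp add: sum.reindex[OF inj] sum_g)
    then have "\<forall>x\<in>F. c (g x) * int (m x) = 0"
      using F(4)[unfolded z_indep_def, rule_format, of "\<lambda>x. c (g x) * int (m x)"] by simp
    then show "\<forall>w\<in>g ` F. c w = 0" using m by fastforce
  qed
  moreover have "card (g ` F) = b" "g ` F \<subseteq> X" using card_image[OF inj] F(1) m unfolding g_def by auto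
  ultimately show "\<exists>a\<in>{card F | F. finite F \<and> F \<subseteq> X \<and> z_indep F}. b \<le> a" using F(2) by blast
qed

lemma tf_rank_eq_if_between_isol:
  assumes fr: "finite_rank (UNIV :: 'a::ab_group_add set)" and "D \<subseteq> (C :: 'a set)" "C \<subseteq> isol D"
  shows "tf_rank C = tf_rank D"
  using tf_rank_mono[OF fr assms(2)] tf_rank_mono[OF fr assms(3)] tf_rank_isol_le[OF fr, of D] by simp

section \<open>Transport along automorphisms\<close>

definition induced_map :: "('a \<Rightarrow> 'a) \<Rightarrow> ('a \<Rightarrow>\<^sub>0 'k::zero) \<Rightarrow> ('a \<Rightarrow>\<^sub>0 'k)" where
  "induced_map \<sigma> f = Abs_poly_mapping (\<lambda>b. lookup f (inv_into UNIV \<sigma> b))"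

locale additive_bij =
  fixes \<sigma> :: "'a::ab_group_add \<Rightarrow> 'a"
  assumes bij: "bij \<sigma>" and add: "\<And>x y. \<sigma> (x + y) = \<sigma> x + \<sigma> y"
begin

lemma inv_apply [simp]: "inv_into UNIV \<sigma> (\<sigma> x) = x" using bij by (simp add: bij_is_inj)
lemma apply_inv [simp]: "\<sigma> (inv_into UNIV \<sigma> x) = x" using bij by (simp add: bij_is_surj surj_f_inv_f)
lemma inv_inv [simp]: "inv_into UNIV (inv_into UNIV \<sigma>) = \<sigma>" using bij by (simp add: inv_inv_eq)

lemma zero [simp]: "\<sigma> 0 = 0"
  using add[of 0 0] by simp

lemma diff: "\<sigma> (x - y) = \<sigma> x - \<sigma> y"
  using add[of "x - y" y] by (simp add: eq_diff_eq)

lemma inv_additive_bij: "additive_bij (inv_into UNIV \<sigma>)"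
proof
  show "bij (inv_into UNIV \<sigma>)" using bij by (rule bij_imp_bij_inv)
  fix x y
  have "\<sigma> (inv_into UNIV \<sigma> x + inv_into UNIV \<sigma> y) = x + y" by (simp add: add)
  then show "inv_into UNIV \<sigma> (x + y) = inv_into UNIV \<sigma> x + inv_into UNIV \<sigma> y" by (metis inv_apply)
qed

lemma lookup_induced_map: "lookup (induced_map \<sigma> f) b = lookup f (inv_into UNIV \<sigma> b)"
proof -
  have "{b. lookup f (inv_into UNIV \<sigma> b) \<noteq> 0} = \<sigma> ` {a. lookup f a \<noteq> 0}"
    by (auto simp: image_iff) (metis apply_inv)
  then have "finite {b. lookup f (inv_into UNIV \<sigma> b) \<noteq> 0}" by simp
  then show ?thesis unfolding induced_map_def by simp
qed

lemma induced_map_inv [simp]: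
  "induced_map (inv_into UNIV \<sigma>) (induced_map \<sigma> f) = f" "induced_map \<sigma> (induced_map (inv_into UNIV \<sigma>) f) = f"
  by (rule poly_mapping_eqI,
      simp add: lookup_induced_map additive_bij.lookup_induced_map[OF inv_additive_bij])+

lemma induced_map_add: "induced_map \<sigma> (f + g) = induced_map \<sigma> f + induced_map \<sigma> (g :: 'a \<Rightarrow>\<^sub>0 'k::comm_ring_1)"
  by (rule poly_mapping_eqI) (simp add: lookup_induced_map lookup_add)

lemma induced_map_sum:
  "induced_map \<sigma> (sum g S) = (\<Sum>x\<in>S. induced_map \<sigma> (g x :: 'a \<Rightarrow>\<^sub>0 'k::comm_ring_1))"
proof (induction S rule: infinite_finite_induct)
  case (infinite S)
  have "induced_map \<sigma> (0 :: 'a \<Rightarrow>\<^sub>0 'k) = 0" by (rule poly_mapping_eqI) (simp add: lookup_induced_map)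
  then show ?case using infinite by simp
next
  case empty
  show ?case by (rule poly_mapping_eqI) (simp add: lookup_induced_map)
qed (simp add: induced_map_add)

lemma induced_map_single: "induced_map \<sigma> (single a c) = single (\<sigma> a) c"
proof (rule poly_mapping_eqI)
  fix b
  have "(a = inv_into UNIV \<sigma> b) = (\<sigma> a = b)" by (metis inv_apply apply_inv)
  then show "lookup (induced_map \<sigma> (single a c)) b = lookup (single (\<sigma> a) c) b"
    by (simp add: lookup_induced_map lookup_single when_def)
qed

lemma induced_map_mult:
  "induced_map \<sigma> (f * g) = induced_map \<sigma> f * induced_map \<sigma> (g :: 'a \<Rightarrow>\<^sub>0 'k::comm_ring_1)"
proof -
  have expand: "induced_map \<sigma> h = (\<Sum>a\<in>keys h. single (\<sigma> a) (lookup h a))" for h :: "'a \<Rightarrow>\<^sub>0 'k"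
    by (subst pm_single_expansion[of h]) (simp only: induced_map_sum induced_map_single)
  have "f * g = (\<Sum>a\<in>keys f. \<Sum>b\<in>keys g. single (a + b) (lookup f a * lookup g b))"
    by (subst pm_single_expansion[of f], subst pm_single_expansion[of g]) (simp only: sum_product mult_single)
  then show ?thesis
    by (simp only: expand[of f] expand[of g] induced_map_sum induced_map_single sum_product mult_single add)
qed

lemma ideal_image_eq: "ideal_image \<sigma> P = induced_map \<sigma> ` P"
proof
  show "ideal_image \<sigma> P \<subseteq> induced_map \<sigma> ` P"
  proof
    fix g assume "g \<in> ideal_image \<sigma> P"
    then obtain f where f: "f \<in> P" "\<forall>a. lookup g (\<sigma> a) = lookup f a" unfolding ideal_image_def by blast
    have "g = induced_map \<sigma> f"
      by (rule poly_mapping_eqI) (use f(2) in \<open>metis lookup_induced_map apply_inv\<close>)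
    then show "g \<in> induced_map \<sigma> ` P" using f(1) by blast
  qed
  show "induced_map \<sigma> ` P \<subseteq> ideal_image \<sigma> P"
    unfolding ideal_image_def by (auto simp: lookup_induced_map)
qed

lemma prime_ideal_induced_image:
  fixes P :: "('a \<Rightarrow>\<^sub>0 'k::comm_ring_1) set"
  assumes P: "prime_ideal P"
  shows "prime_ideal (induced_map \<sigma> ` P)"
proof -
  interpret \<tau>: additive_bij "inv_into UNIV \<sigma>" by (rule inv_additive_bij)
  have Pid: "is_ideal P" using prime_idealD(1)[OF P] .
  have mem: "x \<in> induced_map \<sigma> ` P \<longleftrightarrow> induced_map (inv_into UNIV \<sigma>) x \<in> P" for x :: "'a \<Rightarrow>\<^sub>0 'k"
  proof
    assume "induced_map (inv_into UNIV \<sigma>) x \<in> P"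
    then show "x \<in> induced_map \<sigma> ` P"
      using image_eqI[of x "induced_map \<sigma>" "induced_map (inv_into UNIV \<sigma>) x"] by simp
  qed auto
  have "x * y \<in> induced_map \<sigma> ` P \<longleftrightarrow> induced_map (inv_into UNIV \<sigma>) x * induced_map (inv_into UNIV \<sigma>) y \<in> P" for x y
    by (simp add: mem \<tau>.induced_map_mult)
  moreover have "x + y \<in> induced_map \<sigma> ` P \<longleftrightarrow> induced_map (inv_into UNIV \<sigma>) x + induced_map (inv_into UNIV \<sigma>) y \<in> P" for x y
    by (simp add: mem \<tau>.induced_map_add)
  moreover have one: "induced_map (inv_into UNIV \<sigma>) 1 = (1 :: 'a \<Rightarrow>\<^sub>0 'k)"
    and "induced_map (inv_into UNIV \<sigma>) 0 = (0 :: 'a \<Rightarrow>\<^sub>0 'k)"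
    using \<tau>.induced_map_single[of 0 "1 :: 'k"] \<tau>.induced_map_single[of 0 "0 :: 'k"] \<tau>.add[of 0 0] by simp_all
  moreover have "induced_map \<sigma> ` P \<noteq> UNIV"
    using mem[of 1] one prime_idealD(3)[OF P] by auto
  ultimately show ?thesis
    using P mem unfolding prime_ideal_def is_ideal_def is_ideal_in_def by (auto simp del: induced_map_inv)
qed

lemma subgrp_image: "subgrp H \<Longrightarrow> subgrp (\<sigma> ` H)"
  unfolding subgrp_def by (auto simp: diff[symmetric] intro!: image_eqI[of _ \<sigma> 0])

lemma proj_induced_map: "proj (\<sigma> ` H) (induced_map \<sigma> f) = induced_map \<sigma> (proj H f)"
proof (rule poly_mapping_eqI)
  fix b
  have "(b \<in> \<sigma> ` H) = (inv_into UNIV \<sigma> b \<in> H)" by (metis image_iff inv_apply apply_inv)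
  then show "lookup (proj (\<sigma> ` H) (induced_map \<sigma> f)) b = lookup (induced_map \<sigma> (proj H f)) b"
    by (simp add: lookup_proj lookup_induced_map)
qed

lemma controls_induced_image:
  fixes P :: "('a \<Rightarrow>\<^sub>0 'k::comm_ring_1) set"
  assumes P: "is_ideal P" "is_ideal (induced_map \<sigma> ` P)" and H: "subgrp H" and c: "controls UNIV P H"
  shows "controls UNIV (induced_map \<sigma> ` P) (\<sigma> ` H)"
proof -
  have "is_ideal_in (galg UNIV) P" "is_ideal_in (galg UNIV) (induced_map \<sigma> ` P)"
    using P by (simp_all add: is_ideal_def)
  note ctrl = controls_iff_proj[OF subgrp_UNIV this(1) H subset_UNIV]
    controls_iff_proj[OF subgrp_UNIV this(2) subgrp_image[OF H] subset_UNIV]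
  have "\<forall>f\<in>P. proj H f \<in> P" using ctrl(1) c by simp
  then have "\<forall>g\<in>induced_map \<sigma> ` P. proj (\<sigma> ` H) g \<in> induced_map \<sigma> ` P" by (auto simp: proj_induced_map)
  then show ?thesis using ctrl(2) by simp
qed

end

lemma image_controller_subset:
  fixes P :: "('a::ab_group_add \<Rightarrow>\<^sub>0 'k::comm_ring_1) set"
  assumes \<sigma>: "additive_bij \<sigma>" and P: "prime_ideal P"
  shows "\<sigma> ` controller UNIV P \<subseteq> controller UNIV (induced_map \<sigma> ` P)"
proof -
  interpret \<sigma>: additive_bij \<sigma> by (rule \<sigma>)
  interpret \<tau>: additive_bij "inv_into UNIV \<sigma>" by (rule \<sigma>.inv_additive_bij)
  have P': "prime_ideal (induced_map \<sigma> ` P)" by (rule \<sigma>.prime_ideal_induced_image[OF P])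
  have P_back: "induced_map (inv_into UNIV \<sigma>) ` induced_map \<sigma> ` P = P" by (simp add: image_image)
  have "y \<in> H" if y: "y \<in> \<sigma> ` controller UNIV P" and H: "subgrp H" "controls UNIV (induced_map \<sigma> ` P) H"
    for y H
  proof -
    have "controls UNIV P (inv_into UNIV \<sigma> ` H)"
      using \<tau>.controls_induced_image[OF prime_idealD(1)[OF P'] _ H] P_back prime_idealD(1)[OF P] by simp
    then have "controller UNIV P \<subseteq> inv_into UNIV \<sigma> ` H"
      using controller_least[OF \<tau>.subgrp_image[OF H(1)]] by blast
    then show "y \<in> H" using y by (auto simp: image_iff)
  qed
  then show ?thesis unfolding controller_def[of UNIV "induced_map \<sigma> ` P"] by blast
qed

theorem lemma4p1:
  fixes G :: "('g, 'b) monoid_scheme"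
    and act :: "'g \<Rightarrow> 'a::ab_group_add \<Rightarrow> 'a"
    and P :: "('a \<Rightarrow>\<^sub>0 'k::field) set"
  assumes "torsion_free (UNIV :: 'a set)"
    and "finite_rank (UNIV :: 'a set)"
    and "aut_action G act"
    and "prime_ideal P"
    and "faithful P"
  shows "(\<forall>B. subgrp B \<and> dense B \<longrightarrow>
            tf_rank (controller UNIV P) = tf_rank (controller B (galg B \<inter> P)))
       \<and> (standardiser G act P = carrier G \<longrightarrow>
            subgrp (isol (controller UNIV P)) \<and>
            (\<forall>\<gamma>\<in>carrier G. act \<gamma> ` isol (controller UNIV P) \<subseteq> isol (controller UNIV P)))"
proof (intro conjI allI impI ballI)
  note fr = assms(2) and P = assms(4)
  fix B :: "'a set" assume "subgrp B \<and> dense B"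
  then have B: "subgrp B" "dense B" by auto
  show "tf_rank (controller UNIV P) = tf_rank (controller B (galg B \<inter> P))"
    using tf_rank_eq_if_between_isol[OF fr controller_galg_Int_subset controller_subset_isol[OF fr P B]]
      prime_idealD(1)[OF P] B(1) by blast
next
  show "subgrp (isol (controller UNIV P))" by (intro isol_subgrp controller_subgrp)
next
  note fr = assms(2) and P = assms(4)
  fix \<gamma> assume "standardiser G act P = carrier G" and "\<gamma> \<in> carrier G"
  then obtain B where B: "subgrp B" "dense B" "P \<inter> galg B = ideal_image (act \<gamma>) P \<inter> galg B"
    unfolding standardiser_def by blast
  have \<sigma>: "additive_bij (act \<gamma>)"
    using assms(3) \<open>\<gamma> \<in> carrier G\<close> unfolding aut_action_def additive_bij_def by blast
  define P' where "P' = induced_map (act \<gamma>) ` P"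
  have P': "prime_ideal P'" unfolding P'_def by (rule additive_bij.prime_ideal_induced_image[OF \<sigma> P])
  have "galg B \<inter> P' = galg B \<inter> P" using B(3) unfolding P'_def additive_bij.ideal_image_eq[OF \<sigma>] by blast
  then have "isol (controller UNIV P) = isol (controller UNIV P')"
    using isol_controller_galg_Int[OF fr P B(1,2)] isol_controller_galg_Int[OF fr P' B(1,2)] by simp
  moreover have "act \<gamma> ` isol (controller UNIV P) \<subseteq> isol (controller UNIV P')"
    using image_isol_subset[OF additive_bij.add[OF \<sigma>]] isol_mono[OF image_controller_subset[OF \<sigma> P]]
    unfolding P'_def by blast
  ultimately show "act \<gamma> ` isol (controller UNIV P) \<subseteq> isol (controller UNIV P)" by simp
qed

end
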